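(* Let $\nu>2$ be fixed, let $G$ be a chordal graph (information filtering network) on $\{1,\dots,p\}$ with clique-forest structure given by cliques $\mathcal C$ and separators $\mathcal S$, and let $\hat{\mathbf x}(s)\in\mathbb R^p$, $s=1,\dots,q$, be observations. Consider the multivariate Student-t log-likelihood $$\ell(\boldsymbol\mu,\mathbf J,\nu)=q\log\!\left(\frac{\Gamma(\frac{\nu+p}{2})}{(\nu-2)^{p/2}\pi^{p/2}\Gamma(\frac\nu2)}\right)+\frac q2\log|\mathbf J|-\frac{\nu+p}{2}\sum_{s=1}^q\log\!\left(1+\frac{1}{\nu-2}d^2_{\hat{\mathbf x}(s)}\right),$$ $d^2_{\hat{\mathbf x}(s)}=(\hat{\mathbf x}(s)-\boldsymbol\mu)^\top\mathbf J(\hat{\mathbf x}(s)-\boldsymbol\mu)$, over $\boldsymbol\mu\in\mathbb R^p$ and symmetric positive definite $\mathbf J$ whose off-diagonal entries may be non-zero only at edges of $G$. Let $(\boldsymbol\mu^*,\mathbf J^* )$ be the maximum likelihood solution, let $d^{*2}_{\hat{\mathbf x}(s)}=(\hat{\mathbf x}(s)-\boldsymbol\mu^* )^\top\mathbf J^*(\hat{\mathbf x}(s)-\boldsymbol\mu^* )$ and $w_s^*=\dfrac{\nu+p}{\nu+\frac{\nu}{\nu-2}d^{*2}_{\hat{\mathbf x}(s)}}$. Then $$J^*_{i,j}=\sum_{c\in\mathcal C}\big(\boldsymbol\Sigma_c^{*-1}\big)_{i,j}-\sum_{s\in\mathcal S}\big(\boldsymbol\Sigma_s^{*-1}\big)_{i,j}$$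 when $i,j$ are an edge of a clique (or $i=j$), and $J^*_{i,j}=0$ for all other pairs, where $\boldsymbol\Sigma^*_c,\boldsymbol\Sigma^*_s$ are the restrictions to the variables in $c$, respectively $s$, of the weighted covariance matrix $$\boldsymbol\Sigma^*_{i,j}=\frac{\nu}{\nu-2}\,\frac1q\sum_{s=1}^q w_s^*\,(\hat x_i(s)-\mu_i^* )(\hat x_j(s)-\mu_j^* ).$$
   Context: A clique forest (junction tree) of a chordal graph has as nodes the cliques $c\in\mathcal C$ and as links the separators $s\in\mathcal S$, each separator being the intersection of two adjacent cliques. For a subset $a$ of variables, $(\boldsymbol\Sigma_a^{*-1})_{i,j}$ denotes the entry of the inverse of the $|a|\times|a|$ matrix $\boldsymbol\Sigma^*_a$ for variables $i,j\in a$, and $0$ if $i\notin a$ or $j\notin a$. $\mathbf J$ is the inverse covariance of the Student-t distribution with $\nu>2$ degrees of freedom. *)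

theory Defs
  imports "HOL-Analysis.Analysis"
begin

definition simple_graph :: "('n \<Rightarrow> 'n \<Rightarrow> bool) \<Rightarrow> bool" where
  "simple_graph E \<longleftrightarrow> (\<forall>i j. E i j \<longrightarrow> E j i) \<and> (\<forall>i. \<not> E i i)"

definition chordal :: "('n \<Rightarrow> 'n \<Rightarrow> bool) \<Rightarrow> bool" where
  "chordal E \<longleftrightarrow>
     (\<forall>vs. 4 \<le> length vs \<and> distinct vs \<and>
        (\<forall>k < length vs. E (vs ! k) (vs ! ((k + 1) mod length vs))) \<longrightarrow>
        (\<exists>k l. k < length vs \<and> l < length vs \<and> k \<noteq> l \<and>
           l \<noteq> (k + 1) mod length vs \<and> k \<noteq> (l + 1) mod length vs \<and>
           E (vs ! k) (vs ! l)))"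

definition is_clique :: "('n \<Rightarrow> 'n \<Rightarrow> bool) \<Rightarrow> 'n set \<Rightarrow> bool" where
  "is_clique E K \<longleftrightarrow> K \<noteq> {} \<and> (\<forall>i\<in>K. \<forall>j\<in>K. i \<noteq> j \<longrightarrow> E i j)"

definition max_cliques :: "('n \<Rightarrow> 'n \<Rightarrow> bool) \<Rightarrow> 'n set set" where
  "max_cliques E = {K. is_clique E K \<and> (\<forall>K'. is_clique E K' \<and> K \<subseteq> K' \<longrightarrow> K' = K)}"

definition connected_in :: "'a set set \<Rightarrow> 'a set \<Rightarrow> 'a \<Rightarrow> 'a \<Rightarrow> bool" where
  "connected_in F N a b \<longleftrightarrow> (a, b) \<in> {(x, y). {x, y} \<in> F \<and> x \<in> N \<and> y \<in> N}\<^sup>*"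

text \<open>A forest: every edge is a bridge (equivalently: no cycles).\<close>
definition is_forest :: "'a set set \<Rightarrow> bool" where
  "is_forest F \<longleftrightarrow> (\<forall>e\<in>F. \<forall>x y. e = {x, y} \<longrightarrow> \<not> connected_in (F - {e}) UNIV x y)"

text \<open>The separators are the intersections of adjacent cliques, i.e. \<open>\<Inter> e\<close> for e \<in> F
  (counted with multiplicity, one per link).\<close>
definition clique_forest :: "('n \<Rightarrow> 'n \<Rightarrow> bool) \<Rightarrow> 'n set set set \<Rightarrow> bool" where
  "clique_forest E F \<longleftrightarrow>
     (\<forall>e\<in>F. \<exists>c c'. e = {c, c'} \<and> c \<noteq> c' \<and> c \<in> max_cliques E \<and> c' \<in> max_cliques E) \<and>
     is_forest F \<and>
     (\<forall>v. \<forall>c\<in>max_cliques E. \<forall>c'\<in>max_cliques E. v \<in> c \<and> v \<in> c' \<longrightarrow>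
         connected_in F {d \<in> max_cliques E. v \<in> d} c c')"

definition pos_def :: "real^'n^'n \<Rightarrow> bool" where
  "pos_def J \<longleftrightarrow> (\<forall>x. x \<noteq> 0 \<longrightarrow> x \<bullet> (J *v x) > 0)"

definition symmetric_mat :: "real^'n^'n \<Rightarrow> bool" where
  "symmetric_mat J \<longleftrightarrow> transpose J = J"

definition admissible :: "('n \<Rightarrow> 'n \<Rightarrow> bool) \<Rightarrow> real^'n^'n \<Rightarrow> bool" where
  "admissible E J \<longleftrightarrow> symmetric_mat J \<and> pos_def J \<and>
     (\<forall>i j. i \<noteq> j \<and> \<not> E i j \<longrightarrow> J $ i $ j = 0)"

definition mahal2 :: "real^'n^'n \<Rightarrow> real^'n \<Rightarrow> real^'n \<Rightarrow> real" where
  "mahal2 J \<mu> x = (x - \<mu>) \<bullet> (J *v (x - \<mu>))"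

definition loglik_t :: "real \<Rightarrow> nat \<Rightarrow> (nat \<Rightarrow> real^'n) \<Rightarrow> real^'n \<Rightarrow> real^'n^'n \<Rightarrow> real" where
  "loglik_t \<nu> q x \<mu> J =
     (let p = real CARD('n) in
      real q * ln (Gamma ((\<nu> + p) / 2) /
        ((\<nu> - 2) powr (p / 2) * pi powr (p / 2) * Gamma (\<nu> / 2)))
      + real q / 2 * ln (det J)
      - (\<nu> + p) / 2 * (\<Sum>s = 1..q. ln (1 + mahal2 J \<mu> (x s) / (\<nu> - 2))))"

definition t_weight :: "real \<Rightarrow> real^'n^'n \<Rightarrow> real^'n \<Rightarrow> real^'n \<Rightarrow> real" where
  "t_weight \<nu> J \<mu> x = (\<nu> + real CARD('n)) / (\<nu> + \<nu> / (\<nu> - 2) * mahal2 J \<mu> x)"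

definition wcov :: "real \<Rightarrow> nat \<Rightarrow> (nat \<Rightarrow> real^'n) \<Rightarrow> real^'n \<Rightarrow> real^'n^'n \<Rightarrow> real^'n^'n" where
  "wcov \<nu> q x \<mu> J = (\<chi> i j. \<nu> / (\<nu> - 2) * (1 / real q) *
      (\<Sum>s = 1..q. t_weight \<nu> J \<mu> (x s) * (x s $ i - \<mu> $ i) * (x s $ j - \<mu> $ j)))"

text \<open>\<open>restr_inv M a i j\<close>: entry (i,j) of the inverse of the principal submatrix \<open>M_a\<close>
  (the unique B on a\<times>a with \<open>M_a B = I\<close>), and 0 if i \<notin> a or j \<notin> a.\<close>
definition restr_inv :: "real^'n^'n \<Rightarrow> 'n set \<Rightarrow> 'n \<Rightarrow> 'n \<Rightarrow> real" where
  "restr_inv M a i j =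
     (if i \<in> a \<and> j \<in> a then
        (THE B. (\<forall>k\<in>a. \<forall>l\<in>a. (\<Sum>m\<in>a. M $ k $ m * B m l) = (if k = l then 1 else 0)) \<and>
                (\<forall>k l. k \<notin> a \<or> l \<notin> a \<longrightarrow> B k l = 0)) i j
      else 0)"

end

theory Submission
  imports Defs
begin

text \<open>
  Let \<open>K\<close> be the inverse of the maximum likelihood precision matrix \<open>J*\<close>. Perturbing \<open>J*\<close> in
  the admissible direction \<open>E\<^sub>i\<^sub>j + E\<^sub>j\<^sub>i\<close> (with \<open>i = j\<close> or \<open>ij\<close> an edge) and
  differentiating the log-likelihood at its maximum gives \<open>K\<^sub>i\<^sub>j = \<Sigma>*\<^sub>i\<^sub>j\<close>: by Cramer's
  rule the log-determinant contributes \<open>K\<^sub>i\<^sub>j\<close>, and the data term contributes the weighted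
  covariance. Hence \<open>K\<close> and \<open>\<Sigma>*\<close> agree on every clique.

  On the other hand \<open>J* = K\<^sup>-\<^sup>1\<close> vanishes off the edges, and such inverses decompose along the
  clique forest. Cutting a link with separator \<open>s\<close> splits the vertices into \<open>V\<^sub>1 \<union> V\<^sub>2\<close>
  with \<open>V\<^sub>1 \<inter> V\<^sub>2 = s\<close>, and \<open>K\<^sup>-\<^sup>1\<close> vanishes between \<open>V\<^sub>1 - s\<close> and \<open>V\<^sub>2 - s\<close>.
  Writing the inverses of the principal submatrices on \<open>V\<^sub>1\<close>, \<open>V\<^sub>2\<close> and \<open>s\<close> as Schur
  complements in \<open>K\<^sup>-\<^sup>1\<close> shows that \<open>K\<^sup>-\<^sup>1\<close> is the sum of the two outer ones minus
  the one on \<open>s\<close> (each padded with zeros). Induction on the number of cliques gives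
  \<open>J* = \<Sum>\<^sub>c [(K\<^sub>c)\<^sup>-\<^sup>1] - \<Sum>\<^sub>s [(K\<^sub>s)\<^sup>-\<^sup>1]\<close>, in which only clique blocks of
  \<open>K = \<Sigma>*\<close> occur.
\<close>

section \<open>Inverses of principal submatrices\<close>

definition is_inverse_on :: "'n::finite set \<Rightarrow> ('n \<Rightarrow> 'n \<Rightarrow> real) \<Rightarrow> ('n \<Rightarrow> 'n \<Rightarrow> real) \<Rightarrow> bool" where
  "is_inverse_on W M B \<longleftrightarrow>
     (\<forall>k\<in>W. \<forall>l\<in>W. (\<Sum>m\<in>W. M k m * B m l) = (if k = l then 1 else 0)) \<and>
     (\<forall>k l. k \<notin> W \<or> l \<notin> W \<longrightarrow> B k l = 0)"

text \<open>The inverse of the principal submatrix \<open>M\<^sub>W\<close>, padded with zeros; it is unspecified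
  unless \<open>M\<close> is positive definite on \<open>W\<close>.\<close>
definition inverse_on :: "('n::finite \<Rightarrow> 'n \<Rightarrow> real) \<Rightarrow> 'n set \<Rightarrow> 'n \<Rightarrow> 'n \<Rightarrow> real" where
  "inverse_on M W = (THE B. is_inverse_on W M B)"

definition pos_def_on :: "'n::finite set \<Rightarrow> ('n \<Rightarrow> 'n \<Rightarrow> real) \<Rightarrow> bool" where
  "pos_def_on W M \<longleftrightarrow> (\<forall>z. (\<forall>i. i \<notin> W \<longrightarrow> z i = 0) \<longrightarrow> (\<exists>i. z i \<noteq> 0) \<longrightarrow>
      (\<Sum>k\<in>W. \<Sum>m\<in>W. z k * M k m * z m) > 0)"

lemma pos_def_on_kernel:
  assumes pd: "pos_def_on W M" and out: "\<And>i. i \<notin> W \<Longrightarrow> z i = 0"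
    and ker: "\<And>k. k \<in> W \<Longrightarrow> (\<Sum>m\<in>W. M k m * z m) = 0"
  shows "z = (\<lambda>_. 0)"
proof -
  have "(\<Sum>k\<in>W. \<Sum>m\<in>W. z k * M k m * z m) = (\<Sum>k\<in>W. z k * (\<Sum>m\<in>W. M k m * z m))"
    by (simp add: sum_distrib_left mult.assoc)
  also have "\<dots> = 0" using ker by simp
  finally have "\<not> (\<Sum>k\<in>W. \<Sum>m\<in>W. z k * M k m * z m) > 0" by simp
  then have "\<not> (\<exists>i. z i \<noteq> 0)"
    using pd out unfolding pos_def_on_def by blast
  then show ?thesis by auto
qed

lemma is_inverse_on_unique:
  assumes pd: "pos_def_on W M" and B1: "is_inverse_on W M B1" and B2: "is_inverse_on W M B2"
  shows "B1 = B2"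
proof (intro ext)
  fix r l
  show "B1 r l = B2 r l"
  proof (cases "l \<in> W")
    case True
    have "(\<lambda>m. B1 m l - B2 m l) = (\<lambda>_. 0)"
    proof (rule pos_def_on_kernel[OF pd])
      show "(\<Sum>m\<in>W. M k m * (B1 m l - B2 m l)) = 0" if "k \<in> W" for k
        using B1 B2 that True by (simp add: is_inverse_on_def right_diff_distrib sum_subtractf)
    qed (use B1 B2 in \<open>simp add: is_inverse_on_def\<close>)
    then show ?thesis by (simp add: fun_eq_iff)
  qed (use B1 B2 in \<open>simp add: is_inverse_on_def\<close>)
qed

definition pad_matrix :: "'n::finite set \<Rightarrow> ('n \<Rightarrow> 'n \<Rightarrow> real) \<Rightarrow> real^'n^'n" where
  "pad_matrix W M = (\<chi> i j. if i \<in> W \<and> j \<in> W then M i j else if i = j then 1 else 0)"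

lemma pad_matrix_mult_vec:
  "(pad_matrix W M *v x) $ i = (if i \<in> W then (\<Sum>j\<in>W. M i j * x $ j) else x $ i)"
proof (cases "i \<in> W")
  case True
  have "(pad_matrix W M *v x) $ i = (\<Sum>j\<in>UNIV. if j \<in> W then M i j * x $ j else 0)"
    using True by (auto simp: pad_matrix_def matrix_vector_mult_def intro!: sum.cong)
  then show ?thesis using True by (simp add: sum.If_cases)
next
  case False
  have "(pad_matrix W M *v x) $ i = (\<Sum>j\<in>UNIV. (if i = j then 1 else 0) * x $ j)"
    using False by (auto simp: pad_matrix_def matrix_vector_mult_def intro!: sum.cong)
  also have "\<dots> = (\<Sum>j\<in>UNIV. if i = j then x $ j else 0)" by (rule sum.cong) auto
  finally show ?thesis using False by simp
qed

lemma inj_pad_matrix: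
  assumes pd: "pos_def_on W M"
  shows "inj ((*v) (pad_matrix W M))"
proof -
  have ker: "x = 0" if Ax: "pad_matrix W M *v x = 0" for x
  proof -
    have "(\<lambda>i. x $ i) = (\<lambda>_. 0)"
    proof (rule pos_def_on_kernel[OF pd])
      show "x $ i = 0" if "i \<notin> W" for i
        using pad_matrix_mult_vec[of W M x i] Ax that by simp
      show "(\<Sum>j\<in>W. M k j * x $ j) = 0" if "k \<in> W" for k
        using pad_matrix_mult_vec[of W M x k] Ax that by simp
    qed
    then show ?thesis by (simp add: vec_eq_iff fun_eq_iff)
  qed
  show ?thesis
  proof (rule injI)
    fix x y assume "pad_matrix W M *v x = pad_matrix W M *v y"
    then have "pad_matrix W M *v (x - y) = 0" by (simp add: matrix_vector_mult_diff_distrib)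
    then show "x = y" using ker[of "x - y"] by simp
  qed
qed

lemma is_inverse_on_exists:
  fixes M :: "'n::finite \<Rightarrow> 'n \<Rightarrow> real"
  assumes pd: "pos_def_on W M"
  obtains B where "is_inverse_on W M B"
proof -
  define A where "A = pad_matrix W M"
  obtain A' where "A' ** A = mat 1"
    using inj_pad_matrix[OF pd] matrix_left_invertible_injective unfolding A_def by blast
  then have AA': "A ** A' = mat 1" using matrix_left_right_inverse by blast
  have "is_inverse_on W M (\<lambda>k l. if k \<in> W \<and> l \<in> W then A' $ k $ l else 0)"
    unfolding is_inverse_on_def
  proof (intro conjI ballI allI impI)
    fix k l assume k: "k \<in> W" and l: "l \<in> W"
    have "(\<Sum>m\<in>W. M k m * (if m \<in> W \<and> l \<in> W then A' $ m $ l else 0))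
        = (\<Sum>m\<in>UNIV. A $ k $ m * A' $ m $ l)"
      by (rule sum.mono_neutral_cong_left) (use k l in \<open>auto simp: A_def pad_matrix_def\<close>)
    also have "\<dots> = (A ** A') $ k $ l" by (simp add: matrix_matrix_mult_def)
    finally show "(\<Sum>m\<in>W. M k m * (if m \<in> W \<and> l \<in> W then A' $ m $ l else 0)) = (if k = l then 1 else 0)"
      by (simp add: AA' mat_def)
  qed auto
  then show ?thesis by (rule that)
qed

lemma is_inverse_on_inverse_on: "pos_def_on W M \<Longrightarrow> is_inverse_on W M (inverse_on M W)"
proof -
  assume pd: "pos_def_on W M"
  obtain B where B: "is_inverse_on W M B" using is_inverse_on_exists[OF pd] .
  show ?thesis
    unfolding inverse_on_def by (rule theI[of _ B]) (use B is_inverse_on_unique[OF pd] in auto)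
qed

lemma inverse_on_eqI: "pos_def_on W M \<Longrightarrow> is_inverse_on W M B \<Longrightarrow> inverse_on M W = B"
  using is_inverse_on_inverse_on is_inverse_on_unique by blast

lemma inverse_on_outside: "pos_def_on W M \<Longrightarrow> k \<notin> W \<or> l \<notin> W \<Longrightarrow> inverse_on M W k l = 0"
  using is_inverse_on_inverse_on unfolding is_inverse_on_def by blast

lemma inverse_on_right:
  "pos_def_on W M \<Longrightarrow> k \<in> W \<Longrightarrow> l \<in> W \<Longrightarrow>
     (\<Sum>m\<in>W. M k m * inverse_on M W m l) = (if k = l then 1 else 0)"
  using is_inverse_on_inverse_on unfolding is_inverse_on_def by blast

lemma inverse_on_cong:
  assumes "\<And>k l. k \<in> W \<Longrightarrow> l \<in> W \<Longrightarrow> M k l = K k l"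
  shows "inverse_on M W = inverse_on K W"
proof -
  have "is_inverse_on W M B \<longleftrightarrow> is_inverse_on W K B" for B
  proof -
    have "(\<Sum>m\<in>W. M k m * B m l) = (\<Sum>m\<in>W. K k m * B m l)" if "k \<in> W" for k l
      by (rule sum.cong) (simp_all add: assms that)
    then show ?thesis unfolding is_inverse_on_def by auto
  qed
  then show ?thesis by (simp add: inverse_on_def)
qed

lemma pos_def_on_subset:
  assumes pd: "pos_def_on V M" and WV: "W \<subseteq> V"
  shows "pos_def_on W M"
  unfolding pos_def_on_def
proof (intro allI impI)
  fix z :: "'a \<Rightarrow> real" assume out: "\<forall>i. i \<notin> W \<longrightarrow> z i = 0" and nz: "\<exists>i. z i \<noteq> 0"
  have "(\<Sum>k\<in>V. \<Sum>m\<in>V. z k * M k m * z m) = (\<Sum>k\<in>W. \<Sum>m\<in>W. z k * M k m * z m)"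
  proof (rule sum.mono_neutral_cong_right)
    show "(\<Sum>m\<in>V. z k * M k m * z m) = (\<Sum>m\<in>W. z k * M k m * z m)" for k
      by (rule sum.mono_neutral_cong_right) (use WV out in auto)
  qed (use WV out in auto)
  moreover have "\<forall>i. i \<notin> V \<longrightarrow> z i = 0" using out WV by blast
  ultimately show "(\<Sum>k\<in>W. \<Sum>m\<in>W. z k * M k m * z m) > 0"
    using pd nz unfolding pos_def_on_def by auto
qed

lemma is_inverse_on_pos_def_on:
  assumes pd: "pos_def_on V M" and X: "is_inverse_on V M X"
  shows "pos_def_on V X"
  unfolding pos_def_on_def
proof (intro allI impI)
  fix z :: "'a \<Rightarrow> real" assume out: "\<forall>i. i \<notin> V \<longrightarrow> z i = 0" and nz: "\<exists>i. z i \<noteq> 0"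
  define y where "y = (\<lambda>k. if k \<in> V then (\<Sum>l\<in>V. X k l * z l) else 0)"
  have My: "(\<Sum>m\<in>V. M k m * y m) = z k" if "k \<in> V" for k
  proof -
    have "(\<Sum>m\<in>V. M k m * y m) = (\<Sum>m\<in>V. \<Sum>l\<in>V. M k m * X m l * z l)"
      by (simp add: y_def sum_distrib_left mult.assoc)
    also have "\<dots> = (\<Sum>l\<in>V. (\<Sum>m\<in>V. M k m * X m l) * z l)"
      by (subst sum.swap) (simp add: sum_distrib_right)
    also have "\<dots> = (\<Sum>l\<in>V. (if k = l then 1 else 0) * z l)"
      using X that by (simp add: is_inverse_on_def)
    also have "\<dots> = (\<Sum>l\<in>V. if k = l then z l else 0)" by (rule sum.cong) auto
    finally show ?thesis using that by simp
  qed
  have "\<exists>i. y i \<noteq> 0"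
  proof (rule ccontr)
    assume "\<not> (\<exists>i. y i \<noteq> 0)"
    then have "z k = 0" if "k \<in> V" for k using My[OF that] by simp
    then show False using nz out by blast
  qed
  moreover have "\<forall>i. i \<notin> V \<longrightarrow> y i = 0" by (simp add: y_def)
  ultimately have pos: "(\<Sum>k\<in>V. \<Sum>m\<in>V. y k * M k m * y m) > 0"
    using pd unfolding pos_def_on_def by blast
  have "(\<Sum>k\<in>V. \<Sum>m\<in>V. z k * X k m * z m) = (\<Sum>k\<in>V. z k * y k)"
    by (simp add: y_def sum_distrib_left mult_ac)
  also have "\<dots> = (\<Sum>k\<in>V. (\<Sum>m\<in>V. M k m * y m) * y k)" using My by simp
  also have "\<dots> = (\<Sum>k\<in>V. \<Sum>m\<in>V. y k * M k m * y m)"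
    by (rule sum.cong[OF refl]) (simp add: sum_distrib_right sum_distrib_left mult_ac)
  finally show "(\<Sum>k\<in>V. \<Sum>m\<in>V. z k * X k m * z m) > 0" using pos by simp
qed

lemma restr_inv_eq_inverse_on:
  "restr_inv M a i j = (if i \<in> a \<and> j \<in> a then inverse_on (\<lambda>k l. M $ k $ l) a i j else 0)"
  by (simp add: restr_inv_def inverse_on_def is_inverse_on_def)

lemma restr_inv_eq_inverse_on_pos_def:
  assumes pd: "pos_def_on W K" and eq: "\<And>k l. k \<in> W \<Longrightarrow> l \<in> W \<Longrightarrow> M $ k $ l = K k l"
  shows "restr_inv M W = inverse_on K W"
  using inverse_on_cong[of W "\<lambda>k l. M $ k $ l" K, OF eq] inverse_on_outside[OF pd]
  by (auto simp: fun_eq_iff restr_inv_eq_inverse_on)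

section \<open>Schur complements\<close>

lemma sum_triple_rearrange:
  fixes f :: "'a \<Rightarrow> real"
  shows "(\<Sum>m\<in>M. f m * (\<Sum>p\<in>P. \<Sum>n\<in>N. J m p * Y p n * g n))
       = (\<Sum>p\<in>P. \<Sum>n\<in>N. (\<Sum>m\<in>M. f m * J m p) * Y p n * g n)"
proof -
  have "(\<Sum>m\<in>M. f m * (\<Sum>p\<in>P. \<Sum>n\<in>N. J m p * Y p n * g n))
      = (\<Sum>m\<in>M. \<Sum>p\<in>P. \<Sum>n\<in>N. f m * J m p * Y p n * g n)"
    by (simp add: sum_distrib_left mult.assoc)
  also have "\<dots> = (\<Sum>p\<in>P. \<Sum>m\<in>M. \<Sum>n\<in>N. f m * J m p * Y p n * g n)"
    by (rule sum.swap)
  also have "\<dots> = (\<Sum>p\<in>P. \<Sum>n\<in>N. \<Sum>m\<in>M. f m * J m p * Y p n * g n)"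
    by (rule sum.cong[OF refl], rule sum.swap)
  also have "\<dots> = (\<Sum>p\<in>P. \<Sum>n\<in>N. (\<Sum>m\<in>M. f m * J m p) * Y p n * g n)"
    by (simp add: sum_distrib_right)
  finally show ?thesis .
qed

lemma sum_inverse_on_cancel:
  assumes pd: "pos_def_on U J" and m: "m \<in> U"
  shows "(\<Sum>p\<in>U. \<Sum>n\<in>U. J m p * inverse_on J U p n * g n) = g m"
proof -
  have "(\<Sum>p\<in>U. \<Sum>n\<in>U. J m p * inverse_on J U p n * g n)
      = (\<Sum>n\<in>U. (\<Sum>p\<in>U. J m p * inverse_on J U p n) * g n)"
    by (subst sum.swap) (simp add: sum_distrib_right)
  also have "\<dots> = (\<Sum>n\<in>U. if m = n then g n else 0)"
    by (rule sum.cong[OF refl]) (simp add: inverse_on_right[OF pd m])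
  finally show ?thesis using m by simp
qed

lemma sum_inverse_on_row:
  assumes pd: "pos_def_on X J" and row: "k \<notin> X \<Longrightarrow> \<forall>m\<in>X. J k m = 0"
  shows "(\<Sum>m\<in>X. J k m * inverse_on J X m l) = (if k = l \<and> l \<in> X then 1 else 0)"
proof (cases "k \<in> X \<and> l \<in> X")
  case True
  then show ?thesis using inverse_on_right[OF pd] by simp
next
  case False
  then have "\<forall>m\<in>X. J k m * inverse_on J X m l = 0"
    using row inverse_on_outside[OF pd] by auto
  then have "(\<Sum>m\<in>X. J k m * inverse_on J X m l) = 0" by (rule sum.neutral)
  with False show ?thesis by auto
qed

lemma double_sum_restrict:
  fixes Y :: "'a::finite \<Rightarrow> 'a \<Rightarrow> real"
  assumes "A \<subseteq> S" and "\<And>p n. p \<notin> A \<or> n \<notin> A \<Longrightarrow> Y p n = 0"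
  shows "(\<Sum>p\<in>S. \<Sum>n\<in>S. f p * Y p n * g n) = (\<Sum>p\<in>A. \<Sum>n\<in>A. f p * Y p n * g n)"
proof (rule sum.mono_neutral_cong_right)
  show "(\<Sum>n\<in>S. f p * Y p n * g n) = (\<Sum>n\<in>A. f p * Y p n * g n)" if "p \<in> A" for p
    by (rule sum.mono_neutral_cong_right) (use assms in auto)
qed (use assms in auto)

text \<open>With \<open>J = (K\<^sub>V)\<^sup>-\<^sup>1\<close> and \<open>U = V - W\<close>, \<open>(K\<^sub>W)\<^sup>-\<^sup>1\<close> is the Schur complement
  \<open>J\<^sub>W\<^sub>W - J\<^sub>W\<^sub>U (J\<^sub>U\<^sub>U)\<^sup>-\<^sup>1 J\<^sub>U\<^sub>W\<close>; \<open>schur_correction J U\<close> is the subtracted term.\<close>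
definition schur_correction :: "('n::finite \<Rightarrow> 'n \<Rightarrow> real) \<Rightarrow> 'n set \<Rightarrow> 'n \<Rightarrow> 'n \<Rightarrow> real" where
  "schur_correction J U a b = (\<Sum>p\<in>U. \<Sum>n\<in>U. J a p * inverse_on J U p n * J n b)"

lemma schur_correction_eq_0:
  "(\<forall>p\<in>U. J a p = 0) \<or> (\<forall>n\<in>U. J n b = 0) \<Longrightarrow> schur_correction J U a b = 0"
  by (auto simp: schur_correction_def intro!: sum.neutral)

lemma inverse_on_Schur:
  assumes pd: "pos_def_on V K" and WV: "W \<subseteq> V"
  shows "inverse_on K W a b =
    (if a \<in> W \<and> b \<in> W then inverse_on K V a b - schur_correction (inverse_on K V) (V - W) a b else 0)"
proof -
  define J where "J = inverse_on K V"
  define U where "U = V - W"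
  have pdU: "pos_def_on U J"
    unfolding J_def U_def
    by (rule pos_def_on_subset[OF is_inverse_on_pos_def_on[OF pd is_inverse_on_inverse_on[OF pd]]]) auto
  have V: "V = W \<union> U" "W \<inter> U = {}" using WV by (auto simp: U_def)
  have "is_inverse_on W K (\<lambda>a b. if a \<in> W \<and> b \<in> W then J a b - schur_correction J U a b else 0)"
    unfolding is_inverse_on_def
  proof (intro conjI ballI allI impI)
    fix k l assume k: "k \<in> W" and l: "l \<in> W"
    have KJ: "(\<Sum>m\<in>W. K k m * J m p) + (\<Sum>m\<in>U. K k m * J m p) = (if k = p then 1 else 0)"
      if "p \<in> V" for p
      using inverse_on_right[OF pd, of k p] k that WV V by (simp add: J_def sum.union_disjoint)
    have cross: "(\<Sum>m\<in>W. K k m * J m p) = - (\<Sum>m\<in>U. K k m * J m p)" if "p \<in> U" for p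
      using KJ[of p] k V that by (auto simp: eq_neg_iff_add_eq_0)
    have "(\<Sum>m\<in>W. K k m * schur_correction J U m l)
        = (\<Sum>p\<in>U. \<Sum>n\<in>U. (\<Sum>m\<in>W. K k m * J m p) * inverse_on J U p n * J n l)"
      unfolding schur_correction_def by (rule sum_triple_rearrange)
    also have "\<dots> = (\<Sum>p\<in>U. \<Sum>n\<in>U. (- (\<Sum>m\<in>U. K k m * J m p)) * inverse_on J U p n * J n l)"
      by (intro sum.cong refl) (simp add: cross)
    also have "\<dots> = - (\<Sum>m\<in>U. K k m * (\<Sum>p\<in>U. \<Sum>n\<in>U. J m p * inverse_on J U p n * J n l))"
      by (simp add: sum_triple_rearrange sum_negf)
    also have "\<dots> = - (\<Sum>m\<in>U. K k m * J m l)"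
      using sum_inverse_on_cancel[OF pdU] by simp
    finally have corr: "(\<Sum>m\<in>W. K k m * schur_correction J U m l) = - (\<Sum>m\<in>U. K k m * J m l)" .
    have "(\<Sum>m\<in>W. K k m * (if m \<in> W \<and> l \<in> W then J m l - schur_correction J U m l else 0))
        = (\<Sum>m\<in>W. K k m * J m l) - (\<Sum>m\<in>W. K k m * schur_correction J U m l)"
      using l by (simp add: right_diff_distrib sum_subtractf)
    also have "\<dots> = (if k = l then 1 else 0)"
      using corr KJ[of l] l WV by auto
    finally show "(\<Sum>m\<in>W. K k m * (if m \<in> W \<and> l \<in> W then J m l - schur_correction J U m l else 0))
        = (if k = l then 1 else 0)" .
  qed auto
  from inverse_on_eqI[OF pos_def_on_subset[OF pd WV] this] show ?thesis
    by (simp add: J_def U_def)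
qed

lemma inverse_on_block_diag:
  assumes pd: "pos_def_on (A \<union> B) J" and AB: "A \<inter> B = {}"
    and zero: "\<And>a b. a \<in> A \<Longrightarrow> b \<in> B \<Longrightarrow> J a b = 0 \<and> J b a = 0"
  shows "inverse_on J (A \<union> B) a b = inverse_on J A a b + inverse_on J B a b"
proof -
  have pdA: "pos_def_on A J" and pdB: "pos_def_on B J"
    using pos_def_on_subset[OF pd] by auto
  have "is_inverse_on (A \<union> B) J (\<lambda>a b. inverse_on J A a b + inverse_on J B a b)"
    unfolding is_inverse_on_def
  proof (intro conjI ballI allI impI)
    fix k l assume k: "k \<in> A \<union> B" and l: "l \<in> A \<union> B"
    have "(\<Sum>m\<in>A \<union> B. J k m * (inverse_on J A m l + inverse_on J B m l))
        = (\<Sum>m\<in>A \<union> B. J k m * inverse_on J A m l) + (\<Sum>m\<in>A \<union> B. J k m * inverse_on J B m l)"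
      by (simp add: distrib_left sum.distrib)
    also have "\<dots> = (\<Sum>m\<in>A. J k m * inverse_on J A m l) + (\<Sum>m\<in>B. J k m * inverse_on J B m l)"
      by (intro arg_cong2[where f = "(+)"] sum.mono_neutral_cong_right)
        (auto simp: inverse_on_outside[OF pdA] inverse_on_outside[OF pdB])
    also have "\<dots> = (if k = l \<and> l \<in> A then 1 else 0) + (if k = l \<and> l \<in> B then 1 else 0)"
    proof -
      have "k \<notin> A \<Longrightarrow> \<forall>m\<in>A. J k m = 0" "k \<notin> B \<Longrightarrow> \<forall>m\<in>B. J k m = 0"
        using k zero by auto
      then show ?thesis by (simp add: sum_inverse_on_row[OF pdA] sum_inverse_on_row[OF pdB])
    qed
    also have "\<dots> = (if k = l then 1 else 0)"
      using l AB by auto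
    finally show "(\<Sum>m\<in>A \<union> B. J k m * (inverse_on J A m l + inverse_on J B m l)) = (if k = l then 1 else 0)" .
  qed (auto simp: inverse_on_outside[OF pdA] inverse_on_outside[OF pdB])
  from inverse_on_eqI[OF pd this] show ?thesis by simp
qed

lemma schur_correction_block_diag:
  assumes pd: "pos_def_on (A \<union> B) J" and AB: "A \<inter> B = {}"
    and zero: "\<And>a b. a \<in> A \<Longrightarrow> b \<in> B \<Longrightarrow> J a b = 0 \<and> J b a = 0"
  shows "schur_correction J (A \<union> B) a b = schur_correction J A a b + schur_correction J B a b"
proof -
  have pdA: "pos_def_on A J" and pdB: "pos_def_on B J"
    using pos_def_on_subset[OF pd] by auto
  have "schur_correction J (A \<union> B) a b
      = (\<Sum>p\<in>A \<union> B. \<Sum>n\<in>A \<union> B. J a p * inverse_on J A p n * J n b)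
      + (\<Sum>p\<in>A \<union> B. \<Sum>n\<in>A \<union> B. J a p * inverse_on J B p n * J n b)"
    by (simp add: schur_correction_def inverse_on_block_diag[OF pd AB zero]
        distrib_left distrib_right sum.distrib)
  also have "\<dots> = schur_correction J A a b + schur_correction J B a b"
    unfolding schur_correction_def
    by (intro arg_cong2[where f = "(+)"] double_sum_restrict)
      (auto simp: inverse_on_outside[OF pdA] inverse_on_outside[OF pdB])
  finally show ?thesis .
qed

text \<open>All three inverses on the right are Schur complements in \<open>inverse_on K (V1 \<union> V2)\<close>, which is
  block diagonal on \<open>(V\<^sub>1 - V\<^sub>2) \<union> (V\<^sub>2 - V\<^sub>1)\<close>, so the correction for \<open>V\<^sub>1 \<inter> V\<^sub>2\<close> is the
  sum of those for \<open>V\<^sub>1\<close> and \<open>V\<^sub>2\<close>.\<close>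
lemma inverse_on_Un:
  assumes pd: "pos_def_on (V1 \<union> V2) K"
    and cross: "\<And>a b. a \<in> V1 - V2 \<Longrightarrow> b \<in> V2 - V1 \<Longrightarrow>
      inverse_on K (V1 \<union> V2) a b = 0 \<and> inverse_on K (V1 \<union> V2) b a = 0"
  shows "inverse_on K (V1 \<union> V2) a b = inverse_on K V1 a b + inverse_on K V2 a b - inverse_on K (V1 \<inter> V2) a b"
proof -
  define J where "J = inverse_on K (V1 \<union> V2)"
  define A where "A = V1 - V2"
  define B where "B = V2 - V1"
  have pdJ: "pos_def_on (A \<union> B) J"
    unfolding J_def
    by (rule pos_def_on_subset[OF is_inverse_on_pos_def_on[OF pd is_inverse_on_inverse_on[OF pd]]])
      (auto simp: A_def B_def)
  have AB: "A \<inter> B = {}" by (auto simp: A_def B_def)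
  have zero: "J a b = 0 \<and> J b a = 0" if "a \<in> A" "b \<in> B" for a b
    using cross that by (simp add: J_def A_def B_def)
  have outside: "J a b = 0" if "a \<notin> V1 \<union> V2 \<or> b \<notin> V1 \<union> V2" for a b
    using inverse_on_outside[OF pd that] by (simp add: J_def)
  have diff: "V1 \<union> V2 - V1 = B" "V1 \<union> V2 - V2 = A" "V1 \<union> V2 - V1 \<inter> V2 = A \<union> B"
    by (auto simp: A_def B_def)
  have "V1 \<inter> V2 \<subseteq> V1 \<union> V2" by blast
  have Schur1: "inverse_on K V1 a b = (if a \<in> V1 \<and> b \<in> V1 then J a b - schur_correction J B a b else 0)"
    using inverse_on_Schur[OF pd Un_upper1, of a b] unfolding diff J_def[symmetric] .
  have Schur2: "inverse_on K V2 a b = (if a \<in> V2 \<and> b \<in> V2 then J a b - schur_correction J A a b else 0)"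
    using inverse_on_Schur[OF pd Un_upper2, of a b] unfolding diff J_def[symmetric] .
  have Schur12: "inverse_on K (V1 \<inter> V2) a b = (if a \<in> V1 \<inter> V2 \<and> b \<in> V1 \<inter> V2
      then J a b - (schur_correction J A a b + schur_correction J B a b) else 0)"
    using inverse_on_Schur[OF pd \<open>V1 \<inter> V2 \<subseteq> V1 \<union> V2\<close>, of a b]
    unfolding diff J_def[symmetric] by (simp only: schur_correction_block_diag[OF pdJ AB zero])
  have "schur_correction J B a b = 0" if "a \<in> A \<or> b \<in> A"
    using that zero by (intro schur_correction_eq_0) auto
  moreover have "schur_correction J A a b = 0" if "a \<in> B \<or> b \<in> B"
    using that zero by (intro schur_correction_eq_0) auto
  ultimately show ?thesis
    unfolding Schur1 Schur2 Schur12 J_def[symmetric] using zero[of a b] zero[of b a] outside[of a b]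
    by (auto simp: A_def B_def)
qed

section \<open>Junction forests\<close>

definition links_in :: "'a set \<Rightarrow> 'a set set \<Rightarrow> bool" where
  "links_in C F \<longleftrightarrow> (\<forall>e\<in>F. \<exists>c c'. e = {c, c'} \<and> c \<noteq> c' \<and> c \<in> C \<and> c' \<in> C)"

definition running_intersection :: "'a set set \<Rightarrow> 'a set set set \<Rightarrow> bool" where
  "running_intersection C F \<longleftrightarrow>
     (\<forall>v. \<forall>c\<in>C. \<forall>c'\<in>C. v \<in> c \<and> v \<in> c' \<longrightarrow> connected_in F {d \<in> C. v \<in> d} c c')"

definition junction_forest :: "'a set set \<Rightarrow> 'a set set set \<Rightarrow> bool" where
  "junction_forest C F \<longleftrightarrow> links_in C F \<and> is_forest F \<and> running_intersection C F"

lemma clique_forest_iff_junction_forest: "clique_forest E F \<longleftrightarrow> junction_forest (max_cliques E) F"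
  by (simp add: clique_forest_def junction_forest_def links_in_def running_intersection_def)

lemma links_inD: "links_in C F \<Longrightarrow> e \<in> F \<Longrightarrow> \<exists>c c'. e = {c, c'} \<and> c \<noteq> c' \<and> c \<in> C \<and> c' \<in> C"
  unfolding links_in_def by blast

lemma links_in_subset: "links_in C F \<Longrightarrow> F' \<subseteq> F \<Longrightarrow> \<forall>f\<in>F'. f \<subseteq> C' \<Longrightarrow> links_in C' F'"
  unfolding links_in_def by (metis insert_subset subsetD)

lemma is_forest_subset:
  assumes "is_forest F" "F' \<subseteq> F"
  shows "is_forest F'"
  unfolding is_forest_def
proof (intro ballI allI impI notI)
  fix e x y assume e: "e \<in> F'" "e = {x, y}" and conn: "connected_in (F' - {e}) UNIV x y"
  have "{(a, b). {a, b} \<in> F' - {e} \<and> a \<in> UNIV \<and> b \<in> UNIV}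
      \<subseteq> {(a, b). {a, b} \<in> F - {e} \<and> a \<in> UNIV \<and> b \<in> UNIV}"
    using assms(2) by auto
  from rtrancl_mono[OF this] conn have "connected_in (F - {e}) UNIV x y"
    unfolding connected_in_def by blast
  with assms e show False unfolding is_forest_def by blast
qed

lemma connected_in_edge_iff:
  assumes "{y, z} \<in> G"
  shows "connected_in G UNIV a y \<longleftrightarrow> connected_in G UNIV a z"
proof -
  have "{z, y} \<in> G" using assms by (simp add: insert_commute)
  with assms show ?thesis
    unfolding connected_in_def by (blast intro: rtrancl_into_rtrancl)
qed

lemma connected_in_crosses_link:
  assumes conn: "connected_in F N d d'" and d: "d \<in> C'" "d' \<notin> C'" and e: "e = {c1, c2}"
    and closed: "\<And>x y. {x, y} \<in> F - {e} \<Longrightarrow> x \<in> C' \<Longrightarrow> y \<in> C'"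
  shows "c1 \<in> N \<and> c2 \<in> N"
proof -
  have "y \<in> C' \<or> (c1 \<in> N \<and> c2 \<in> N)"
    if "(d, y) \<in> {(x, y). {x, y} \<in> F \<and> x \<in> N \<and> y \<in> N}\<^sup>*" for y
    using that
  proof (induction rule: rtrancl_induct)
    case base
    then show ?case using d by simp
  next
    case (step y z)
    then have yz: "{y, z} \<in> F" "y \<in> N" "z \<in> N" by auto
    show ?case
    proof (cases "{y, z} = e")
      case True
      then show ?thesis using e yz by (auto simp: doubleton_eq_iff)
    next
      case False
      then show ?thesis using step.IH closed yz by auto
    qed
  qed
  with conn d show ?thesis unfolding connected_in_def by blast
qed

text \<open>A path that leaves \<open>C'\<close> through \<open>e\<close> can only come back through \<open>e\<close>, i.e. to \<open>c1\<close>.\<close>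
lemma running_intersection_cut:
  assumes ri: "running_intersection C F" and e: "e = {c1, c2}"
    and C': "C' \<subseteq> C" "c1 \<in> C'" "c2 \<notin> C'"
    and closed: "\<And>y z. {y, z} \<in> F - {e} \<Longrightarrow> y \<in> C' \<longleftrightarrow> z \<in> C'"
  shows "running_intersection C' {f \<in> F - {e}. f \<subseteq> C'}"
  unfolding running_intersection_def
proof (intro allI ballI impI)
  fix v d d' assume d: "d \<in> C'" "d' \<in> C'" and v: "v \<in> d \<and> v \<in> d'"
  define R where "R = {(x, y). {x, y} \<in> F \<and> x \<in> {x \<in> C. v \<in> x} \<and> y \<in> {x \<in> C. v \<in> x}}"
  define R' where "R' = {(x, y). {x, y} \<in> {f \<in> F - {e}. f \<subseteq> C'} \<and>
    x \<in> {x \<in> C'. v \<in> x} \<and> y \<in> {x \<in> C'. v \<in> x}}"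
  have "(y \<in> C' \<and> (d, y) \<in> R'\<^sup>*) \<or> (y \<notin> C' \<and> (d, c1) \<in> R'\<^sup>*)" if "(d, y) \<in> R\<^sup>*" for y
    using that
  proof (induction rule: rtrancl_induct)
    case base
    then show ?case using d by simp
  next
    case (step y z)
    then have yz: "{y, z} \<in> F" "v \<in> y" "v \<in> z" by (auto simp: R_def)
    show ?case
    proof (cases "{y, z} = e")
      case True
      then have "(y = c1 \<and> z = c2) \<or> (y = c2 \<and> z = c1)" using e by (auto simp: doubleton_eq_iff)
      then show ?thesis using step.IH C' by auto
    next
      case False
      then have "{y, z} \<in> F - {e}" using yz by simp
      then have "y \<in> C' \<longleftrightarrow> z \<in> C'" by (rule closed)
      moreover have "(y, z) \<in> R'" if "y \<in> C'" "z \<in> C'"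
        using that yz False by (auto simp: R'_def)
      ultimately show ?thesis using step.IH by (meson rtrancl.rtrancl_into_rtrancl)
    qed
  qed
  moreover have "(d, d') \<in> R\<^sup>*"
    using ri d v C'(1) unfolding running_intersection_def connected_in_def R_def by blast
  ultimately show "connected_in {f \<in> F - {e}. f \<subseteq> C'} {x \<in> C'. v \<in> x} d d'"
    using d unfolding connected_in_def R'_def by blast
qed

lemma running_intersection_separator:
  assumes ri: "running_intersection C F" and e: "e = {c1, c2}"
    and C': "C' \<subseteq> C" "c1 \<in> C'" "c2 \<in> C - C'"
    and closed: "\<And>y z. {y, z} \<in> F - {e} \<Longrightarrow> y \<in> C' \<Longrightarrow> z \<in> C'"
  shows "\<Union>C' \<inter> \<Union>(C - C') = c1 \<inter> c2"
proof
  show "\<Union>C' \<inter> \<Union>(C - C') \<subseteq> c1 \<inter> c2"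
  proof
    fix v assume "v \<in> \<Union>C' \<inter> \<Union>(C - C')"
    then obtain d1 d2 where d: "d1 \<in> C'" "d2 \<in> C - C'" "v \<in> d1" "v \<in> d2" by blast
    then have "d1 \<in> C" "d2 \<in> C" using C'(1) by auto
    then have "connected_in F {d \<in> C. v \<in> d} d1 d2"
      using ri d(3,4) unfolding running_intersection_def by blast
    from connected_in_crosses_link[OF this d(1) _ e closed] d(2)
    show "v \<in> c1 \<inter> c2" by simp
  qed
  show "c1 \<inter> c2 \<subseteq> \<Union>C' \<inter> \<Union>(C - C')" using C'(2,3) by auto
qed

lemma junction_forest_cut:
  assumes jf: "junction_forest C F" and e: "e = {c1, c2}"
    and C': "C' \<subseteq> C" "c1 \<in> C'" "c2 \<notin> C'"
    and closed: "\<And>y z. {y, z} \<in> F - {e} \<Longrightarrow> y \<in> C' \<longleftrightarrow> z \<in> C'"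
  shows "junction_forest C' {f \<in> F - {e}. f \<subseteq> C'}"
proof -
  have lk: "links_in C F" and fo: "is_forest F" and ri: "running_intersection C F"
    using jf by (auto simp: junction_forest_def)
  have "links_in C' {f \<in> F - {e}. f \<subseteq> C'}" by (rule links_in_subset[OF lk]) auto
  moreover have "is_forest {f \<in> F - {e}. f \<subseteq> C'}" by (rule is_forest_subset[OF fo]) auto
  moreover have "running_intersection C' {f \<in> F - {e}. f \<subseteq> C'}"
    by (rule running_intersection_cut[OF ri e C' closed])
  ultimately show ?thesis by (simp add: junction_forest_def)
qed

lemma junction_forest_cut_link:
  assumes jf: "junction_forest C F" and eF: "e \<in> F"
  obtains C1 C2 F1 F2 c1 c2 where "C = C1 \<union> C2" "C1 \<inter> C2 = {}" "c1 \<in> C1" "c2 \<in> C2"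
    "e = {c1, c2}" "\<Union>C1 \<inter> \<Union>C2 = c1 \<inter> c2" "F - {e} = F1 \<union> F2" "F1 \<inter> F2 = {}"
    "junction_forest C1 F1" "junction_forest C2 F2"
proof -
  have lk: "links_in C F" and fo: "is_forest F" and ri: "running_intersection C F"
    using jf by (auto simp: junction_forest_def)
  obtain c1 c2 where e: "e = {c1, c2}" "c1 \<in> C" "c2 \<in> C"
    using links_inD[OF lk eF] by blast
  define C1 where "C1 = {d \<in> C. connected_in (F - {e}) UNIV c1 d}"
  define C2 where "C2 = C - C1"
  have c1: "c1 \<in> C1" using e by (simp add: C1_def connected_in_def)
  have "\<not> connected_in (F - {e}) UNIV c1 c2" using fo[unfolded is_forest_def] eF e(1) by blast
  then have c2: "c2 \<in> C2" using e by (simp add: C1_def C2_def)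
  have in_C: "y \<in> C \<and> z \<in> C" if "{y, z} \<in> F" for y z
    using links_inD[OF lk that] by (auto simp: doubleton_eq_iff)
  have closed1: "y \<in> C1 \<longleftrightarrow> z \<in> C1" if yz: "{y, z} \<in> F - {e}" for y z
    using in_C[of y z] yz connected_in_edge_iff[OF yz] unfolding C1_def by blast
  have closed2: "y \<in> C2 \<longleftrightarrow> z \<in> C2" if yz: "{y, z} \<in> F - {e}" for y z
    using closed1[OF yz] in_C[of y z] yz by (auto simp: C2_def)
  have "F - {e} = {f \<in> F - {e}. f \<subseteq> C1} \<union> {f \<in> F - {e}. f \<subseteq> C2}"
  proof -
    have "f \<subseteq> C1 \<or> f \<subseteq> C2" if f: "f \<in> F - {e}" for f
    proof -
      obtain y z where "f = {y, z}" using links_inD[OF lk] f by blast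
      then show ?thesis using f closed1[of y z] in_C[of y z] by (auto simp: C2_def)
    qed
    then show ?thesis by blast
  qed
  moreover have "{f \<in> F - {e}. f \<subseteq> C1} \<inter> {f \<in> F - {e}. f \<subseteq> C2} = {}"
  proof -
    have "f = {}" if "f \<subseteq> C1" "f \<subseteq> C2" for f using that by (auto simp: C2_def)
    moreover have "{} \<notin> F" using links_inD[OF lk, of "{}"] by auto
    ultimately show ?thesis by blast
  qed
  moreover have "\<Union>C1 \<inter> \<Union>C2 = c1 \<inter> c2"
    unfolding C2_def using closed1 c1 c2 by (intro running_intersection_separator[OF ri e(1)])
      (auto simp: C1_def C2_def)
  moreover have "junction_forest C1 {f \<in> F - {e}. f \<subseteq> C1}"
    using c1 c2 closed1 by (intro junction_forest_cut[OF jf e(1)]) (auto simp: C1_def C2_def)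
  moreover have "junction_forest C2 {f \<in> F - {e}. f \<subseteq> C2}"
    using c1 c2 closed2 e(1) by (intro junction_forest_cut[OF jf, of e c2 c1]) (auto simp: C2_def)
  moreover have "C = C1 \<union> C2" "C1 \<inter> C2 = {}" by (auto simp: C1_def C2_def)
  ultimately show ?thesis using that[OF _ _ c1 c2 e(1)] by blast
qed

lemma junction_forest_edgeless_iff:
  "junction_forest C {} \<longleftrightarrow> (\<forall>c\<in>C. \<forall>c'\<in>C. c \<inter> c' \<noteq> {} \<longrightarrow> c = c')"
  by (auto simp: junction_forest_def links_in_def is_forest_def running_intersection_def
      connected_in_def)

lemma junction_forest_split:
  assumes jf: "junction_forest C F" and c: "c \<in> C" "C \<noteq> {c}"
  obtains C1 C2 F1 F2 c1 c2 where "C = C1 \<union> C2" "C1 \<inter> C2 = {}" "c1 \<in> C1" "c2 \<in> C2"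
    "\<Union>C1 \<inter> \<Union>C2 \<subseteq> c1 \<inter> c2" "junction_forest C1 F1" "junction_forest C2 F2" "F1 \<inter> F2 = {}"
    "F = F1 \<union> F2 \<and> \<Union>C1 \<inter> \<Union>C2 = {} \<or>
     (\<exists>e. e \<notin> F1 \<union> F2 \<and> F = insert e (F1 \<union> F2) \<and> \<Inter>e = \<Union>C1 \<inter> \<Union>C2)"
proof (cases "F = {}")
  case True
  then have disj: "\<forall>c\<in>C. \<forall>c'\<in>C. c \<inter> c' \<noteq> {} \<longrightarrow> c = c'"
    using jf by (simp add: junction_forest_edgeless_iff)
  obtain c' where c': "c' \<in> C - {c}" using c by blast
  have sep: "\<Union>{c} \<inter> \<Union>(C - {c}) = {}" using disj c(1) by blast
  have "junction_forest {c} {}" "junction_forest (C - {c}) {}"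
    unfolding junction_forest_edgeless_iff using disj by blast+
  moreover have "C = {c} \<union> (C - {c})" using c by blast
  ultimately show ?thesis
    using that[of "{c}" "C - {c}" c c' "{}" "{}"] c' sep True by blast
next
  case False
  then obtain e where "e \<in> F" by blast
  from junction_forest_cut_link[OF jf this] obtain C1 C2 F1 F2 c1 c2
    where split: "C = C1 \<union> C2" "C1 \<inter> C2 = {}" "c1 \<in> C1" "c2 \<in> C2" "e = {c1, c2}"
      "\<Union>C1 \<inter> \<Union>C2 = c1 \<inter> c2" "F - {e} = F1 \<union> F2" "F1 \<inter> F2 = {}"
      "junction_forest C1 F1" "junction_forest C2 F2" .
  have "F = insert e (F1 \<union> F2)" "e \<notin> F1 \<union> F2" using split(7) \<open>e \<in> F\<close> by auto
  moreover have "\<Inter>e = \<Union>C1 \<inter> \<Union>C2" using split(5,6) by simp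
  ultimately show ?thesis
    using that[OF split(1-4) _ split(9,10,8)] split(6) by blast
qed

lemma is_clique_subset_max_clique:
  fixes E :: "'n::finite \<Rightarrow> 'n \<Rightarrow> bool"
  assumes "is_clique E K"
  obtains M where "M \<in> max_cliques E" "K \<subseteq> M"
proof -
  define S where "S = {K'. is_clique E K' \<and> K \<subseteq> K'}"
  have "finite S" "S \<noteq> {}" using assms by (auto simp: S_def)
  then have "Max (card ` S) \<in> card ` S" by (intro Max_in) auto
  then obtain M where M: "Max (card ` S) = card M" "M \<in> S" by (rule imageE)
  have "M \<in> max_cliques E"
    unfolding max_cliques_def
  proof (intro CollectI conjI allI impI)
    show "is_clique E M" using M(2) by (simp add: S_def)
    fix K' assume K': "is_clique E K' \<and> M \<subseteq> K'"
    then have "K' \<in> S" using M(2) by (auto simp: S_def)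
    then have "card K' \<le> Max (card ` S)" using \<open>finite S\<close> by (intro Max_ge) auto
    then have "card K' \<le> card M" using M(1) by simp
    then show "K' = M" using K' card_seteq[of K' M] by simp
  qed
  with M(2) that show ?thesis by (auto simp: S_def)
qed

lemma Union_max_cliques: "\<Union>(max_cliques (E :: 'n::finite \<Rightarrow> 'n \<Rightarrow> bool)) = UNIV"
proof -
  have "v \<in> \<Union>(max_cliques E)" for v
    using is_clique_subset_max_clique[of E "{v}"] by (auto simp: is_clique_def)
  then show ?thesis by blast
qed

lemma edge_in_max_clique:
  fixes E :: "'n::finite \<Rightarrow> 'n \<Rightarrow> bool"
  assumes "simple_graph E" "E a b"
  shows "\<exists>c\<in>max_cliques E. a \<in> c \<and> b \<in> c"
proof -
  have "is_clique E {a, b}" using assms by (auto simp: is_clique_def simple_graph_def)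
  then show ?thesis using is_clique_subset_max_clique by (metis insert_subset)
qed

section \<open>Inverses supported on the cliques of a junction forest\<close>

definition clique_supported :: "'a set set \<Rightarrow> ('a \<Rightarrow> 'a \<Rightarrow> real) \<Rightarrow> bool" where
  "clique_supported C M \<longleftrightarrow> (\<forall>a b. a \<noteq> b \<and> \<not> (\<exists>c\<in>C. a \<in> c \<and> b \<in> c) \<longrightarrow> M a b = 0)"

lemma clique_supportedD:
  "clique_supported C M \<Longrightarrow> a \<noteq> b \<Longrightarrow> \<not> (\<exists>c\<in>C. a \<in> c \<and> b \<in> c) \<Longrightarrow> M a b = 0"
  unfolding clique_supported_def by blast

lemma clique_supported_cross_zero:
  assumes sup: "clique_supported (C1 \<union> C2) M" and a: "a \<in> \<Union>C1 - \<Union>C2" and b: "b \<in> \<Union>C2 - \<Union>C1"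
  shows "M a b = 0 \<and> M b a = 0"
proof -
  have "a \<noteq> b" using a b by blast
  moreover have "\<not> (\<exists>c\<in>C1 \<union> C2. a \<in> c \<and> b \<in> c)" "\<not> (\<exists>c\<in>C1 \<union> C2. b \<in> c \<and> a \<in> c)"
    using a b by blast+
  ultimately show ?thesis using clique_supportedD[OF sup] by simp
qed

lemma inverse_on_Union_Un:
  fixes K :: "'n::finite \<Rightarrow> 'n \<Rightarrow> real"
  assumes pd: "pos_def_on (\<Union>C1 \<union> \<Union>C2) K"
    and sup: "clique_supported (C1 \<union> C2) (inverse_on K (\<Union>C1 \<union> \<Union>C2))"
  shows "inverse_on K (\<Union>C1 \<union> \<Union>C2) a b
    = inverse_on K (\<Union>C1) a b + inverse_on K (\<Union>C2) a b - inverse_on K (\<Union>C1 \<inter> \<Union>C2) a b"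
  by (rule inverse_on_Un[OF pd clique_supported_cross_zero[OF sup]])

lemma clique_supported_inverse_on_Union:
  fixes K :: "'n::finite \<Rightarrow> 'n \<Rightarrow> real"
  assumes pd: "pos_def_on (\<Union>C1 \<union> \<Union>C2) K"
    and sup: "clique_supported (C1 \<union> C2) (inverse_on K (\<Union>C1 \<union> \<Union>C2))"
    and sep: "\<Union>C1 \<inter> \<Union>C2 \<subseteq> c" "c \<in> C1"
  shows "clique_supported C1 (inverse_on K (\<Union>C1))"
  unfolding clique_supported_def
proof (intro allI impI)
  fix a b assume ab: "a \<noteq> b \<and> \<not> (\<exists>c\<in>C1. a \<in> c \<and> b \<in> c)"
  show "inverse_on K (\<Union>C1) a b = 0"
  proof (cases "a \<in> \<Union>C1 \<and> b \<in> \<Union>C1")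
    case True
    then have not2: "\<not> (a \<in> \<Union>C2 \<and> b \<in> \<Union>C2)" using ab sep by blast
    have pd2: "pos_def_on (\<Union>C2) K" by (rule pos_def_on_subset[OF pd]) simp
    have pd12: "pos_def_on (\<Union>C1 \<inter> \<Union>C2) K" by (rule pos_def_on_subset[OF pd]) auto
    have "inverse_on K (\<Union>C2) a b = 0"
      using not2 inverse_on_outside[OF pd2] by simp
    moreover have "inverse_on K (\<Union>C1 \<inter> \<Union>C2) a b = 0"
      using not2 inverse_on_outside[OF pd12, of a b] by blast
    ultimately have "inverse_on K (\<Union>C1) a b = inverse_on K (\<Union>C1 \<union> \<Union>C2) a b"
      using inverse_on_Union_Un[OF pd sup, of a b] by simp
    also have "\<dots> = 0"
    proof (rule clique_supportedD[OF sup])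
      show "a \<noteq> b" using ab by blast
      show "\<not> (\<exists>c\<in>C1 \<union> C2. a \<in> c \<and> b \<in> c)" using ab not2 by blast
    qed
    finally show ?thesis .
  next
    case False
    have "pos_def_on (\<Union>C1) K" by (rule pos_def_on_subset[OF pd]) simp
    then show ?thesis by (rule inverse_on_outside) (use False in blast)
  qed
qed

lemma sum_Inter_split:
  fixes g :: "'a set \<Rightarrow> 'b::comm_monoid_add"
  assumes "finite F" "F1 \<inter> F2 = {}" "g {} = 0"
    and "F = F1 \<union> F2 \<and> s = {} \<or> (\<exists>e. e \<notin> F1 \<union> F2 \<and> F = insert e (F1 \<union> F2) \<and> \<Inter>e = s)"
  shows "(\<Sum>e\<in>F. g (\<Inter>e)) = (\<Sum>e\<in>F1. g (\<Inter>e)) + (\<Sum>e\<in>F2. g (\<Inter>e)) + g s"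
  using assms by (auto simp: sum.union_disjoint add_ac)

theorem inverse_on_junction_forest:
  fixes K :: "'n::finite \<Rightarrow> 'n \<Rightarrow> real"
  assumes "junction_forest C F" "pos_def_on (\<Union>C) K" "clique_supported C (inverse_on K (\<Union>C))"
  shows "inverse_on K (\<Union>C) a b = (\<Sum>c\<in>C. inverse_on K c a b) - (\<Sum>e\<in>F. inverse_on K (\<Inter>e) a b)"
  using assms
proof (induction "card C" arbitrary: C F rule: less_induct)
  case less
  note jf = less.prems(1) and pd = less.prems(2) and sup = less.prems(3)
  consider "C = {}" | c where "C = {c}" | c where "c \<in> C" "C \<noteq> {c}" by blast
  then show ?case
  proof cases
    case 1
    then have "F = {}" using jf by (auto simp: junction_forest_def links_in_def)
    with 1 pd show ?thesis using inverse_on_outside by auto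
  next
    case (2 c)
    then have "F = {}" using jf by (auto simp: junction_forest_def links_in_def)
    with 2 show ?thesis by simp
  next
    case (3 c)
    from junction_forest_split[OF jf 3] obtain C1 C2 F1 F2 c1 c2
      where C: "C = C1 \<union> C2" "C1 \<inter> C2 = {}" and c12: "c1 \<in> C1" "c2 \<in> C2"
        and sep: "\<Union>C1 \<inter> \<Union>C2 \<subseteq> c1 \<inter> c2"
        and jf12: "junction_forest C1 F1" "junction_forest C2 F2" and F12: "F1 \<inter> F2 = {}"
        and F: "F = F1 \<union> F2 \<and> \<Union>C1 \<inter> \<Union>C2 = {} \<or>
          (\<exists>e. e \<notin> F1 \<union> F2 \<and> F = insert e (F1 \<union> F2) \<and> \<Inter>e = \<Union>C1 \<inter> \<Union>C2)" .
    have pd': "pos_def_on (\<Union>C1 \<union> \<Union>C2) K"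
      and sup': "clique_supported (C1 \<union> C2) (inverse_on K (\<Union>C1 \<union> \<Union>C2))"
      using pd sup C(1) by simp_all
    have "\<Union>C2 \<union> \<Union>C1 = \<Union>C1 \<union> \<Union>C2" "C2 \<union> C1 = C1 \<union> C2" by blast+
    note swapped = pd'[folded this(1)] sup'[folded this]
    have sup1: "clique_supported C1 (inverse_on K (\<Union>C1))"
      using clique_supported_inverse_on_Union[OF pd' sup' _ c12(1)] sep by blast
    have sup2: "clique_supported C2 (inverse_on K (\<Union>C2))"
      using clique_supported_inverse_on_Union[OF swapped _ c12(2)] sep by blast
    have "finite C" by simp
    then have "card C1 < card C" "card C2 < card C"
      using C c12 by (auto intro!: psubset_card_mono)
    with less.hyps jf12 sup1 sup2 pos_def_on_subset[OF pd']
    have IH: "inverse_on K (\<Union>C1) a b = (\<Sum>c\<in>C1. inverse_on K c a b) - (\<Sum>e\<in>F1. inverse_on K (\<Inter>e) a b)"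
      "inverse_on K (\<Union>C2) a b = (\<Sum>c\<in>C2. inverse_on K c a b) - (\<Sum>e\<in>F2. inverse_on K (\<Inter>e) a b)"
      by blast+
    have "inverse_on K {} a b = 0"
      using inverse_on_outside[OF pos_def_on_subset[OF pd empty_subsetI]] by blast
    with F F12 have sepsum: "(\<Sum>e\<in>F. inverse_on K (\<Inter>e) a b) = (\<Sum>e\<in>F1. inverse_on K (\<Inter>e) a b)
        + (\<Sum>e\<in>F2. inverse_on K (\<Inter>e) a b) + inverse_on K (\<Union>C1 \<inter> \<Union>C2) a b"
      by (intro sum_Inter_split) simp_all
    have "(\<Sum>c\<in>C. inverse_on K c a b) = (\<Sum>c\<in>C1. inverse_on K c a b) + (\<Sum>c\<in>C2. inverse_on K c a b)"
      using C by (simp add: sum.union_disjoint)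
    then show ?thesis
      using inverse_on_Union_Un[OF pd' sup', of a b] IH sepsum C(1) by simp
  qed
qed

section \<open>Positive definite matrices\<close>

lemma scaleR_matrix_vector_mult: "((c::real) *\<^sub>R (A::real^'n::finite^'m)) *v x = c *\<^sub>R (A *v x)"
  by (simp add: vec_eq_iff matrix_vector_mult_def sum_distrib_left mult.assoc)

lemma inner_matrix_vector_mult_eq_sum:
  "(x::real^'n::finite) \<bullet> (J *v x) = (\<Sum>k\<in>UNIV. \<Sum>m\<in>UNIV. x $ k * J $ k $ m * x $ m)"
  by (simp add: inner_vec_def matrix_vector_mult_def sum_distrib_left mult.assoc)

lemma pos_def_imp_pos_def_on:
  fixes J :: "real^'n::finite^'n"
  assumes "pos_def J"
  shows "pos_def_on UNIV (\<lambda>a b. J $ a $ b)"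
  unfolding pos_def_on_def
proof (intro allI impI)
  fix z :: "'n \<Rightarrow> real" assume "\<exists>i. z i \<noteq> 0"
  then have "(\<chi> i. z i) \<noteq> 0" by (auto simp: vec_eq_iff)
  then have "(\<chi> i. z i) \<bullet> (J *v (\<chi> i. z i)) > 0" using assms unfolding pos_def_def by blast
  then show "(\<Sum>k\<in>UNIV. \<Sum>m\<in>UNIV. z k * J $ k $ m * z m) > 0"
    by (simp add: inner_matrix_vector_mult_eq_sum)
qed

lemma pos_def_invertible:
  fixes J :: "real^'n::finite^'n"
  assumes pd: "pos_def J"
  obtains B where "J ** B = mat 1" "B ** J = mat 1"
proof -
  have "inj ((*v) J)"
  proof (rule injI)
    fix x y assume "J *v x = J *v y"
    then have "(x - y) \<bullet> (J *v (x - y)) = 0" by (simp add: matrix_vector_mult_diff_distrib)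
    show "x = y"
    proof (rule ccontr)
      assume "x \<noteq> y"
      then have "(x - y) \<bullet> (J *v (x - y)) > 0" using pd unfolding pos_def_def by simp
      with \<open>(x - y) \<bullet> (J *v (x - y)) = 0\<close> show False by simp
    qed
  qed
  then obtain B where "B ** J = mat 1" using matrix_left_invertible_injective by blast
  with that show ?thesis using matrix_left_right_inverse by blast
qed

lemma is_inverse_on_UNIV_iff:
  fixes A B :: "real^'n::finite^'n"
  shows "is_inverse_on UNIV (\<lambda>a b. A $ a $ b) (\<lambda>a b. B $ a $ b) \<longleftrightarrow> A ** B = mat 1"
  by (simp add: is_inverse_on_def matrix_matrix_mult_def mat_def vec_eq_iff)

lemma pos_def_inverse_on_UNIV:
  fixes J K :: "real^'n::finite^'n"
  assumes pd: "pos_def J" and JK: "J ** K = mat 1" "K ** J = mat 1"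
  shows "pos_def_on UNIV (\<lambda>a b. K $ a $ b)" and "inverse_on (\<lambda>a b. K $ a $ b) UNIV = (\<lambda>a b. J $ a $ b)"
proof -
  show pdK: "pos_def_on UNIV (\<lambda>a b. K $ a $ b)"
    using is_inverse_on_pos_def_on[OF pos_def_imp_pos_def_on[OF pd]] JK(1)
    by (simp add: is_inverse_on_UNIV_iff)
  show "inverse_on (\<lambda>a b. K $ a $ b) UNIV = (\<lambda>a b. J $ a $ b)"
    using inverse_on_eqI[OF pdK] JK(2) by (simp add: is_inverse_on_UNIV_iff)
qed

lemma transpose_inverse_eq:
  fixes A B :: "real^'n::finite^'n"
  assumes "transpose A = A" "A ** B = mat 1" "B ** A = mat 1"
  shows "transpose B = B"
proof -
  have "transpose B ** A = mat 1"
    using arg_cong[OF assms(2), of transpose] assms(1) by (simp add: matrix_transpose_mul transpose_mat)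
  have "transpose B = transpose B ** (A ** B)" using assms(2) by (simp add: matrix_mul_rid)
  also have "\<dots> = (transpose B ** A) ** B" by (simp add: matrix_mul_assoc)
  also have "\<dots> = B" using \<open>transpose B ** A = mat 1\<close> by (simp add: matrix_mul_lid)
  finally show ?thesis .
qed

text \<open>Along the segment from \<open>J\<close> to the identity all matrices are positive definite, hence
  invertible, so the determinant cannot change sign.\<close>
lemma pos_def_det_pos:
  fixes J :: "real^'n::finite^'n"
  assumes pd: "pos_def J"
  shows "det J > 0"
proof (rule ccontr)
  assume "\<not> det J > 0"
  define P where "P = (\<lambda>s::real. s *\<^sub>R (mat 1 :: real^'n^'n) + (1 - s) *\<^sub>R J)"
  have pdP: "pos_def (P s)" if "0 \<le> s" "s \<le> 1" for s
    unfolding pos_def_def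
  proof (intro allI impI)
    fix x :: "real^'n" assume "x \<noteq> 0"
    then have "x \<bullet> x > 0" "x \<bullet> (J *v x) > 0" using pd unfolding pos_def_def by auto
    moreover have "x \<bullet> (P s *v x) = s * (x \<bullet> x) + (1 - s) * (x \<bullet> (J *v x))"
      by (simp add: P_def scaleR_matrix_vector_mult matrix_vector_mult_add_rdistrib inner_add_right)
    ultimately show "x \<bullet> (P s *v x) > 0" using that
      by (cases "s = 0") (auto intro: add_pos_nonneg)
  qed
  have "continuous_on {0..1} (\<lambda>s. det (P s))"
    unfolding det_def P_def by (intro continuous_intros)
  moreover have "P 0 = J" "P 1 = mat 1" by (simp_all add: P_def)
  ultimately obtain s where s: "0 \<le> s" "s \<le> 1" "det (P s) = 0"
    using IVT'[of "\<lambda>s. det (P s)" 0 0 1] \<open>\<not> det J > 0\<close> by auto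
  obtain B where "P s ** B = mat 1" "B ** P s = mat 1" using pos_def_invertible[OF pdP[OF s(1,2)]] .
  then have "invertible (P s)" unfolding invertible_def by blast
  with s(3) show False using invertible_det_nz by blast
qed

lemma pos_def_lower_bound:
  fixes J :: "real^'n::finite^'n"
  assumes pd: "pos_def J"
  obtains l where "l > 0" "\<And>x. l * (x \<bullet> x) \<le> x \<bullet> (J *v x)"
proof -
  define f where "f = (\<lambda>x::real^'n. x \<bullet> (J *v x))"
  have "axis undefined 1 \<in> sphere (0::real^'n) 1" by simp
  then have "sphere (0::real^'n) 1 \<noteq> {}" by blast
  moreover have "continuous_on (sphere 0 1) f" unfolding f_def by (intro continuous_intros)
  ultimately obtain x0 where x0: "x0 \<in> sphere 0 1" "\<And>y. y \<in> sphere 0 1 \<Longrightarrow> f x0 \<le> f y"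
    using continuous_attains_inf[OF compact_sphere] by blast
  have "x0 \<noteq> 0" using x0(1) by auto
  then have pos: "f x0 > 0" using pd unfolding pos_def_def f_def by blast
  have "f x0 * (x \<bullet> x) \<le> x \<bullet> (J *v x)" for x
  proof (cases "x = 0")
    case False
    then have c: "norm x > 0" by simp
    have "(1 / norm x) *\<^sub>R x \<in> sphere 0 1" using c by simp
    then have "f x0 \<le> f ((1 / norm x) *\<^sub>R x)" by (rule x0(2))
    also have "\<dots> = (1 / norm x)\<^sup>2 * (x \<bullet> (J *v x))"
      by (simp add: f_def matrix_vector_mult_scaleR power2_eq_square)
    finally have "f x0 * (norm x)\<^sup>2 \<le> x \<bullet> (J *v x)" using c by (simp add: field_simps)
    then show ?thesis by (simp add: power2_norm_eq_inner)
  qed simp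
  with pos that show ?thesis by blast
qed

definition sym_unit :: "'n::finite \<Rightarrow> 'n \<Rightarrow> real^'n^'n" where
  "sym_unit i j = (\<chi> a b. if (a = i \<and> b = j) \<or> (a = j \<and> b = i) then 1 else 0)"

lemma sum_sum_delta:
  fixes f :: "'n::finite \<Rightarrow> 'n \<Rightarrow> real"
  shows "(\<Sum>k\<in>UNIV. \<Sum>m\<in>UNIV. f k m * (if k = a \<and> m = b then 1 else 0)) = f a b"
proof -
  have "(\<Sum>m\<in>UNIV. f k m * (if k = a \<and> m = b then 1 else 0)) = (if k = a then f k b else 0)" for k
  proof -
    have "(\<Sum>m\<in>UNIV. f k m * (if k = a \<and> m = b then 1 else 0))
        = (\<Sum>m\<in>UNIV. if m = b then (if k = a then f k m else 0) else 0)"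
      by (rule sum.cong) auto
    then show ?thesis by simp
  qed
  then show ?thesis by simp
qed

lemma inner_sym_unit:
  fixes y :: "real^'n::finite"
  shows "y \<bullet> (sym_unit i j *v y) = (if i = j then 1 else 2) * (y $ i * y $ j)"
proof (cases "i = j")
  case True
  have "y \<bullet> (sym_unit i j *v y) = (\<Sum>k\<in>UNIV. \<Sum>m\<in>UNIV. (y $ k * y $ m) * (if k = i \<and> m = i then 1 else 0))"
    unfolding inner_matrix_vector_mult_eq_sum sym_unit_def using True by (intro sum.cong refl) auto
  then show ?thesis using True by (simp add: sum_sum_delta)
next
  case False
  have "y \<bullet> (sym_unit i j *v y) = (\<Sum>k\<in>UNIV. \<Sum>m\<in>UNIV. (y $ k * y $ m) * (if k = i \<and> m = j then 1 else 0)
      + (y $ k * y $ m) * (if k = j \<and> m = i then 1 else 0))"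
    unfolding inner_matrix_vector_mult_eq_sum sym_unit_def using False by (intro sum.cong refl) auto
  also have "\<dots> = y $ i * y $ j + y $ j * y $ i"
    by (simp only: sum.distrib sum_sum_delta)
  finally show ?thesis using False by simp
qed

lemma abs_inner_sym_unit_le:
  fixes y :: "real^'n::finite"
  shows "\<bar>y \<bullet> (sym_unit i j *v y)\<bar> \<le> y \<bullet> y"
proof -
  have yy: "y \<bullet> y = (\<Sum>k\<in>UNIV. y $ k * y $ k)" by (simp add: inner_vec_def)
  show ?thesis
  proof (cases "i = j")
    case True
    have "y $ i * y $ i \<le> (\<Sum>k\<in>UNIV. y $ k * y $ k)" by (rule member_le_sum) auto
    then show ?thesis using True unfolding inner_sym_unit yy by simp
  next
    case False
    have "\<bar>2 * (y $ i * y $ j)\<bar> \<le> y $ i * y $ i + y $ j * y $ j"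
      using sum_squares_bound[of "y $ i" "y $ j"] sum_squares_bound[of "y $ i" "- y $ j"]
      by (simp add: abs_le_iff power2_eq_square)
    also have "\<dots> = (\<Sum>k\<in>{i, j}. y $ k * y $ k)" using False by simp
    also have "\<dots> \<le> (\<Sum>k\<in>UNIV. y $ k * y $ k)" by (rule sum_mono2) auto
    finally show ?thesis using False unfolding inner_sym_unit yy by simp
  qed
qed

lemma det_row_add_scaled:
  fixes C :: "real^'n::finite^'n"
  shows "det (\<chi> r. if r = k then a + t *s b else C $ r)
    = det (\<chi> r. if r = k then a else C $ r) + t * det (\<chi> r. if r = k then b else C $ r)"
  using det_row_add[of k "\<lambda>_. a" "\<lambda>_. t *s b" "\<lambda>r. C $ r"] det_row_mul[of k t "\<lambda>_. b" "\<lambda>r. C $ r"]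
  by simp

lemma det_row_unit:
  fixes A B :: "real^'n::finite^'n"
  assumes BA: "B ** A = mat 1"
  shows "det (\<chi> r. if r = i then (mat 1 :: real^'n^'n) $ j else A $ r) = B $ j $ i * det A"
proof -
  have "(\<Sum>l\<in>UNIV. B $ j $ l *s A $ l) = (B ** A) $ j"
    by (simp add: vec_eq_iff matrix_matrix_mult_def)
  then have unit: "(\<Sum>l\<in>UNIV. B $ j $ l *s A $ l) = (mat 1 :: real^'n^'n) $ j" using BA by simp
  have rows: "row r A = A $ r" for r by (simp add: row_def vec_eq_iff)
  show ?thesis using cramer_lemma_transpose[of i "B $ j" A] unfolding rows unit by simp
qed

lemma det_add_sym_unit:
  fixes A B :: "real^'n::finite^'n"
  assumes BA: "B ** A = mat 1"
  obtains g where "\<And>t. det (A + t *\<^sub>R sym_unit i j)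
    = det A * (1 + t * (if i = j then B $ i $ i else B $ j $ i + B $ i $ j)) + t\<^sup>2 * g"
proof (cases "i = j")
  case True
  have "A + t *\<^sub>R sym_unit i j = (\<chi> r. if r = i then A $ i + t *s (mat 1 :: real^'n^'n) $ i else A $ r)" for t
    using True by (auto simp: vec_eq_iff mat_def sym_unit_def)
  moreover have "(\<chi> r. if r = i then A $ i else A $ r) = A" by (simp add: vec_eq_iff)
  ultimately have "det (A + t *\<^sub>R sym_unit i j) = det A * (1 + t * B $ i $ i) + t\<^sup>2 * 0" for t
    by (simp add: det_row_add_scaled det_row_unit[OF BA] algebra_simps)
  with True show ?thesis by (intro that[of 0]) simp
next
  case False
  define e where "e k = (mat 1 :: real^'n^'n) $ k" for k
  define D where "D = (\<chi> r. if r = i then e j else A $ r)"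
  have dA: "det (\<chi> r. if r = j then e i else A $ r) = B $ i $ j * det A"
    and dD: "det D = B $ j $ i * det A"
    unfolding e_def D_def by (rule det_row_unit[OF BA])+
  have expand: "det (A + t *\<^sub>R sym_unit i j) = det A * (1 + t * (B $ j $ i + B $ i $ j))
      + t\<^sup>2 * det (\<chi> r. if r = j then e i else D $ r)" for t
  proof -
    define C where "C = (\<chi> r. if r = j then A $ j + t *s e i else A $ r)"
    have "A + t *\<^sub>R sym_unit i j = (\<chi> r. if r = i then A $ i + t *s e j else C $ r)"
      using False by (auto simp: vec_eq_iff mat_def e_def C_def sym_unit_def)
    moreover have "(\<chi> r. if r = i then A $ i else C $ r) = (\<chi> r. if r = j then A $ j + t *s e i else A $ r)"
      and "(\<chi> r. if r = i then e j else C $ r) = (\<chi> r. if r = j then A $ j + t *s e i else D $ r)"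
      and "(\<chi> r. if r = j then A $ j else A $ r) = A"
      and "(\<chi> r. if r = j then A $ j else D $ r) = D"
      using False by (auto simp: vec_eq_iff C_def D_def)
    ultimately show ?thesis
      using False by (simp add: det_row_add_scaled dA dD algebra_simps power2_eq_square)
  qed
  with False show ?thesis by (intro that[of "det (\<chi> r. if r = j then e i else D $ r)"]) simp
qed

section \<open>The likelihood equations\<close>

lemma admissible_add_sym_unit:
  fixes J :: "real^'n::finite^'n"
  assumes G: "simple_graph E" and adm: "admissible E J" and ij: "i = j \<or> E i j"
  obtains l where "l > 0" "\<And>t. \<bar>t\<bar> < l \<Longrightarrow> admissible E (J + t *\<^sub>R sym_unit i j)"
proof -
  have pd: "pos_def J" and sym: "transpose J = J" and zero: "\<And>a b. a \<noteq> b \<Longrightarrow> \<not> E a b \<Longrightarrow> J $ a $ b = 0"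
    using adm unfolding admissible_def symmetric_mat_def by auto
  obtain l where l: "l > 0" "\<And>y. l * (y \<bullet> y) \<le> y \<bullet> (J *v y)"
    using pos_def_lower_bound[OF pd] by blast
  have "admissible E (J + t *\<^sub>R sym_unit i j)" if t: "\<bar>t\<bar> < l" for t
    unfolding admissible_def symmetric_mat_def pos_def_def
  proof (intro conjI allI impI)
    show "transpose (J + t *\<^sub>R sym_unit i j) = J + t *\<^sub>R sym_unit i j"
      using sym by (auto simp: vec_eq_iff transpose_def sym_unit_def)
  next
    fix y :: "real^'n" assume "y \<noteq> 0"
    then have "(l - \<bar>t\<bar>) * (y \<bullet> y) > 0" using t by simp
    moreover have "\<bar>t * (y \<bullet> (sym_unit i j *v y))\<bar> \<le> \<bar>t\<bar> * (y \<bullet> y)"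
      unfolding abs_mult by (rule mult_left_mono[OF abs_inner_sym_unit_le]) simp
    ultimately show "0 < y \<bullet> ((J + t *\<^sub>R sym_unit i j) *v y)"
      using l(2)[of y]
      by (simp add: matrix_vector_mult_add_rdistrib scaleR_matrix_vector_mult inner_add_right
          left_diff_distrib abs_le_iff)
  next
    fix a b assume "a \<noteq> b \<and> \<not> E a b"
    moreover have "E a b" if "(a = i \<and> b = j) \<or> (a = j \<and> b = i)" "a \<noteq> b"
      using that ij G unfolding simple_graph_def by auto
    ultimately show "(J + t *\<^sub>R sym_unit i j) $ a $ b = 0"
      using zero by (auto simp: sym_unit_def)
  qed
  with l(1) that show ?thesis by blast
qed

lemma admissible_clique_supported:
  fixes J :: "real^'n::finite^'n"
  assumes G: "simple_graph E" and adm: "admissible E J"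
  shows "clique_supported (max_cliques E) (\<lambda>a b. J $ a $ b)"
  unfolding clique_supported_def
proof (intro allI impI)
  fix a b assume ab: "a \<noteq> b \<and> \<not> (\<exists>c\<in>max_cliques E. a \<in> c \<and> b \<in> c)"
  then have "\<not> E a b" using edge_in_max_clique[OF G, of a b] by blast
  with ab adm show "J $ a $ b = 0" by (simp add: admissible_def)
qed

lemma mahal2_add_scaleR: "mahal2 (J + t *\<^sub>R H) \<mu> x = mahal2 J \<mu> x + t * mahal2 H \<mu> x"
  by (simp add: mahal2_def matrix_vector_mult_add_rdistrib scaleR_matrix_vector_mult inner_add_right)

lemma mahal2_nonneg: "pos_def J \<Longrightarrow> 0 \<le> mahal2 J \<mu> x"
  unfolding mahal2_def pos_def_def by (cases "x - \<mu> = 0") (auto intro: less_imp_le)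

lemma mahal2_sym_unit:
  "mahal2 (sym_unit i j) \<mu> x = (if i = j then 1 else 2) * ((x $ i - \<mu> $ i) * (x $ j - \<mu> $ j))"
  by (simp add: mahal2_def inner_sym_unit)

lemma t_weight_eq:
  fixes J :: "real^'n::finite^'n"
  assumes nu: "\<nu> > 2" and d: "0 \<le> mahal2 J \<mu> x"
  shows "\<nu> / (\<nu> - 2) * t_weight \<nu> J \<mu> x = (\<nu> + real CARD('n)) / (\<nu> - 2 + mahal2 J \<mu> x)"
proof -
  have den: "\<nu> + \<nu> / (\<nu> - 2) * mahal2 J \<mu> x = \<nu> * (\<nu> - 2 + mahal2 J \<mu> x) / (\<nu> - 2)"
    using nu by (simp add: field_simps)
  have cancel: "v / a * (c / (v * b / a)) = c / b" if "a \<noteq> 0" "b \<noteq> 0" "v \<noteq> 0" for a b c v :: real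
    using that by (simp add: field_simps)
  show ?thesis
    unfolding t_weight_def den using cancel nu d by simp
qed

lemma wcov_eq:
  fixes J :: "real^'n::finite^'n"
  assumes nu: "\<nu> > 2" and pd: "pos_def J"
  shows "wcov \<nu> q x \<mu> J $ i $ j = (\<nu> + real CARD('n)) / real q *
    (\<Sum>s = 1..q. (x s $ i - \<mu> $ i) * (x s $ j - \<mu> $ j) / (\<nu> - 2 + mahal2 J \<mu> (x s)))"
proof -
  have "wcov \<nu> q x \<mu> J $ i $ j = 1 / real q *
      (\<Sum>s = 1..q. (\<nu> / (\<nu> - 2) * t_weight \<nu> J \<mu> (x s)) * ((x s $ i - \<mu> $ i) * (x s $ j - \<mu> $ j)))"
    by (simp add: wcov_def sum_distrib_left mult_ac)
  also have "(\<Sum>s = 1..q. (\<nu> / (\<nu> - 2) * t_weight \<nu> J \<mu> (x s)) * ((x s $ i - \<mu> $ i) * (x s $ j - \<mu> $ j)))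
      = (\<nu> + real CARD('n)) *
        (\<Sum>s = 1..q. (x s $ i - \<mu> $ i) * (x s $ j - \<mu> $ j) / (\<nu> - 2 + mahal2 J \<mu> (x s)))"
    unfolding t_weight_eq[OF nu mahal2_nonneg[OF pd]] by (simp add: sum_distrib_left)
  finally show ?thesis by simp
qed

lemma has_real_derivative_ln_affine:
  fixes c d h :: real
  assumes c: "c > 0" and d: "d \<ge> 0"
  shows "((\<lambda>t. ln (1 + (d + t * h) / c)) has_real_derivative h / (c + d)) (at 0)"
proof -
  have pos: "1 + d / c > 0" using c d by (simp add: add_pos_nonneg)
  have "((\<lambda>t. 1 + (d + t * h) / c) has_real_derivative h / c) (at 0)"
    using c by (auto intro!: derivative_eq_intros simp: add_divide_distrib)
  from DERIV_chain2[OF DERIV_ln_divide this]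
  have deriv: "((\<lambda>t. ln (1 + (d + t * h) / c)) has_real_derivative 1 / (1 + d / c) * (h / c)) (at 0)"
    using pos by simp
  have "1 + d / c = (c + d) / c" using c by (simp add: field_simps)
  then have "1 / (1 + d / c) * (h / c) = (h / c) / ((c + d) / c)" by simp
  also have "\<dots> = h / (c + d)" using c by simp
  finally have "1 / (1 + d / c) * (h / c) = h / (c + d)" .
  with deriv show ?thesis by (simp only:)
qed

lemma has_real_derivative_loglik_t_sym_unit:
  fixes J B :: "real^'n::finite^'n"
  assumes nu: "\<nu> > 2" and pd: "pos_def J" and BJ: "B ** J = mat 1"
  shows "((\<lambda>t. loglik_t \<nu> q x \<mu> (J + t *\<^sub>R sym_unit i j)) has_real_derivative
      real q / 2 * (if i = j then B $ i $ i else B $ j $ i + B $ i $ j)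
      - (\<nu> + real CARD('n)) / 2 *
        (\<Sum>s = 1..q. mahal2 (sym_unit i j) \<mu> (x s) / (\<nu> - 2 + mahal2 J \<mu> (x s)))) (at 0)"
proof -
  define \<alpha> where "\<alpha> = (if i = j then B $ i $ i else B $ j $ i + B $ i $ j)"
  obtain g where det: "\<And>t. det (J + t *\<^sub>R sym_unit i j) = det J * (1 + t * \<alpha>) + t\<^sup>2 * g"
    using det_add_sym_unit[OF BJ] unfolding \<alpha>_def by blast
  define d where "d s = mahal2 J \<mu> (x s)" for s
  define h where "h s = mahal2 (sym_unit i j) \<mu> (x s)" for s
  have "det J > 0" using pos_def_det_pos[OF pd] .
  then have ln_det: "((\<lambda>t. ln (det J * (1 + t * \<alpha>) + t\<^sup>2 * g)) has_real_derivative \<alpha>) (at 0)"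
    by (auto intro!: derivative_eq_intros simp: field_simps)
  have "((\<lambda>t. ln (1 + (d s + t * h s) / (\<nu> - 2))) has_real_derivative h s / (\<nu> - 2 + d s)) (at 0)" for s
    using nu mahal2_nonneg[OF pd] by (intro has_real_derivative_ln_affine) (simp_all add: d_def)
  then have ln_sum: "((\<lambda>t. \<Sum>s = 1..q. ln (1 + (d s + t * h s) / (\<nu> - 2))) has_real_derivative
      (\<Sum>s = 1..q. h s / (\<nu> - 2 + d s))) (at 0)"
    by (rule DERIV_sum)
  have "((\<lambda>t. loglik_t \<nu> q x \<mu> (J + t *\<^sub>R sym_unit i j)) has_real_derivative
      0 + real q / 2 * \<alpha> - (\<nu> + real CARD('n)) / 2 * (\<Sum>s = 1..q. h s / (\<nu> - 2 + d s))) (at 0)"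
    unfolding loglik_t_def Let_def det mahal2_add_scaleR d_def[symmetric] h_def[symmetric]
    by (intro DERIV_diff DERIV_add DERIV_cmult DERIV_const ln_det ln_sum)
  then show ?thesis by (simp add: \<alpha>_def d_def h_def)
qed

lemma loglik_t_max_imp_inverse_eq_wcov:
  fixes J B :: "real^'n::finite^'n"
  assumes nu: "\<nu> > 2" and q: "q \<ge> 1" and G: "simple_graph E" and adm: "admissible E J"
    and max: "\<And>J'. admissible E J' \<Longrightarrow> loglik_t \<nu> q x \<mu> J' \<le> loglik_t \<nu> q x \<mu> J"
    and BJ: "B ** J = mat 1" and symB: "transpose B = B" and ij: "i = j \<or> E i j"
  shows "B $ i $ j = wcov \<nu> q x \<mu> J $ i $ j"
proof -
  have pd: "pos_def J" using adm by (simp add: admissible_def)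
  obtain l where l: "l > 0" "\<And>t. \<bar>t\<bar> < l \<Longrightarrow> admissible E (J + t *\<^sub>R sym_unit i j)"
    using admissible_add_sym_unit[OF G adm ij] by blast
  define S where "S = (\<Sum>s = 1..q. (x s $ i - \<mu> $ i) * (x s $ j - \<mu> $ j) / (\<nu> - 2 + mahal2 J \<mu> (x s)))"
  define m :: real where "m = (if i = j then 1 else 2)"
  have "B $ j $ i = B $ i $ j"
    using arg_cong[OF symB, of "\<lambda>M. M $ i $ j"] by (simp add: transpose_def)
  then have "(if i = j then B $ i $ i else B $ j $ i + B $ i $ j) = m * B $ i $ j"
    by (simp add: m_def)
  moreover have "(\<Sum>s = 1..q. mahal2 (sym_unit i j) \<mu> (x s) / (\<nu> - 2 + mahal2 J \<mu> (x s))) = m * S"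
    by (simp add: mahal2_sym_unit m_def S_def sum_distrib_left)
  ultimately have "real q / 2 * (if i = j then B $ i $ i else B $ j $ i + B $ i $ j)
      - (\<nu> + real CARD('n)) / 2 * (\<Sum>s = 1..q. mahal2 (sym_unit i j) \<mu> (x s) / (\<nu> - 2 + mahal2 J \<mu> (x s)))
      = m / 2 * (real q * B $ i $ j - (\<nu> + real CARD('n)) * S)"
    by (simp add: field_simps)
  with has_real_derivative_loglik_t_sym_unit[OF nu pd BJ, of q x \<mu> i j]
  have "((\<lambda>t. loglik_t \<nu> q x \<mu> (J + t *\<^sub>R sym_unit i j)) has_real_derivative
      m / 2 * (real q * B $ i $ j - (\<nu> + real CARD('n)) * S)) (at 0)"
    by (simp only:)
  moreover have "\<forall>t. \<bar>0 - t\<bar> < l \<longrightarrow>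
      loglik_t \<nu> q x \<mu> (J + t *\<^sub>R sym_unit i j) \<le> loglik_t \<nu> q x \<mu> (J + 0 *\<^sub>R sym_unit i j)"
    using max l(2) by simp
  ultimately have "m / 2 * (real q * B $ i $ j - (\<nu> + real CARD('n)) * S) = 0"
    using DERIV_local_max l(1) by blast
  moreover have "m \<noteq> 0" by (simp add: m_def)
  ultimately have "real q * B $ i $ j = (\<nu> + real CARD('n)) * S" by simp
  moreover have "real q > 0" using q by simp
  ultimately show ?thesis by (simp add: wcov_eq[OF nu pd] S_def field_simps)
qed

lemma admissible_eq_junction_forest_inverse:
  fixes J K :: "real^'n::finite^'n"
  assumes G: "simple_graph E" and T: "clique_forest E F" and adm: "admissible E J"
    and JK: "J ** K = mat 1" "K ** J = mat 1"
  shows "J $ i $ j = (\<Sum>c\<in>max_cliques E. inverse_on (\<lambda>a b. K $ a $ b) c i j)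
    - (\<Sum>e\<in>F. inverse_on (\<lambda>a b. K $ a $ b) (\<Inter>e) i j)"
proof -
  have pd: "pos_def J" using adm by (simp add: admissible_def)
  note pdK = pos_def_inverse_on_UNIV[OF pd JK]
  have "junction_forest (max_cliques E) F" using T by (simp add: clique_forest_iff_junction_forest)
  moreover have "clique_supported (max_cliques E) (inverse_on (\<lambda>a b. K $ a $ b) (\<Union>(max_cliques E)))"
    using admissible_clique_supported[OF G adm] by (simp add: Union_max_cliques pdK(2))
  ultimately show ?thesis
    using inverse_on_junction_forest[of "max_cliques E" F "\<lambda>a b. K $ a $ b" i j] pdK
    by (simp add: Union_max_cliques)
qed

lemma restr_inv_wcov_eq_inverse_on:
  fixes J K :: "real^'n::finite^'n"
  assumes nu: "\<nu> > 2" and q: "q \<ge> 1" and G: "simple_graph E" and adm: "admissible E J"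
    and max: "\<And>J'. admissible E J' \<Longrightarrow> loglik_t \<nu> q x \<mu> J' \<le> loglik_t \<nu> q x \<mu> J"
    and JK: "J ** K = mat 1" "K ** J = mat 1"
    and W: "W \<subseteq> c" "c \<in> max_cliques E"
  shows "restr_inv (wcov \<nu> q x \<mu> J) W = inverse_on (\<lambda>a b. K $ a $ b) W"
proof (rule restr_inv_eq_inverse_on_pos_def)
  have pd: "pos_def J" and sym: "transpose J = J"
    using adm unfolding admissible_def symmetric_mat_def by auto
  show "pos_def_on W (\<lambda>a b. K $ a $ b)"
    by (rule pos_def_on_subset[OF pos_def_inverse_on_UNIV(1)[OF pd JK]]) simp
  fix k l assume "k \<in> W" "l \<in> W"
  then have "k = l \<or> E k l" using W by (auto simp: max_cliques_def is_clique_def)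
  then show "wcov \<nu> q x \<mu> J $ k $ l = K $ k $ l"
    using loglik_t_max_imp_inverse_eq_wcov[OF nu q G adm max JK(2) transpose_inverse_eq[OF sym JK]]
    by simp
qed

theorem theorem4:
  fixes \<nu> :: real and q :: nat
    and E :: "'n::finite \<Rightarrow> 'n \<Rightarrow> bool"
    and F :: "'n set set set"
    and x :: "nat \<Rightarrow> real^'n"
    and \<mu>s :: "real^'n" and Js :: "real^'n^'n"
  assumes nu: "\<nu> > 2"
    and q: "q \<ge> 1"
    and G: "simple_graph E" "chordal E"
    and T: "clique_forest E F"
    and adm: "admissible E Js"
    and mle: "\<And>\<mu> J. admissible E J \<Longrightarrow> loglik_t \<nu> q x \<mu> J \<le> loglik_t \<nu> q x \<mu>s Js"
  shows "\<forall>i j.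
     ((i = j \<or> (\<exists>c\<in>max_cliques E. i \<in> c \<and> j \<in> c)) \<longrightarrow>
        Js $ i $ j = (\<Sum>c\<in>max_cliques E. restr_inv (wcov \<nu> q x \<mu>s Js) c i j)
                   - (\<Sum>e\<in>F. restr_inv (wcov \<nu> q x \<mu>s Js) (\<Inter> e) i j)) \<and>
     (\<not> (i = j \<or> (\<exists>c\<in>max_cliques E. i \<in> c \<and> j \<in> c)) \<longrightarrow> Js $ i $ j = 0)"
proof -
  have "pos_def Js" using adm by (simp add: admissible_def)
  then obtain K where JK: "Js ** K = mat 1" "K ** Js = mat 1" by (rule pos_def_invertible)
  have restr: "restr_inv (wcov \<nu> q x \<mu>s Js) W = inverse_on (\<lambda>a b. K $ a $ b) W"
    if "W \<subseteq> c" "c \<in> max_cliques E" for W c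
    using restr_inv_wcov_eq_inverse_on[OF nu q G(1) adm _ JK that] mle by blast
  have separators: "restr_inv (wcov \<nu> q x \<mu>s Js) (\<Inter>e) = inverse_on (\<lambda>a b. K $ a $ b) (\<Inter>e)"
    if e: "e \<in> F" for e
  proof -
    have "links_in (max_cliques E) F"
      using T by (simp add: clique_forest_iff_junction_forest junction_forest_def)
    then obtain c c' where "e = {c, c'}" "c \<in> max_cliques E" using links_inD[OF _ e] by blast
    then show ?thesis by (intro restr[of _ c]) auto
  qed
  show ?thesis
  proof (intro allI conjI impI)
    fix i j
    show "Js $ i $ j = (\<Sum>c\<in>max_cliques E. restr_inv (wcov \<nu> q x \<mu>s Js) c i j)
        - (\<Sum>e\<in>F. restr_inv (wcov \<nu> q x \<mu>s Js) (\<Inter> e) i j)"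
      unfolding admissible_eq_junction_forest_inverse[OF G(1) T adm JK]
      using restr[OF subset_refl] separators by simp
  next
    fix i j assume "\<not> (i = j \<or> (\<exists>c\<in>max_cliques E. i \<in> c \<and> j \<in> c))"
    then show "Js $ i $ j = 0"
      using clique_supportedD[OF admissible_clique_supported[OF G(1) adm]] by blast
  qed
qed

end
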